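(* Let Assumption 1 hold with some $\delta\in(0,1]$. Let $A\ge1$, define $\alpha$ by $$\alpha=2L\Big\{1-\Phi\big(A\sqrt{2\log L}\big)\Big\}+2A_0\frac{\big(1+A\sqrt{2\log L}\big)^{1+\delta}}{L^{A^2-1}d_{n,\delta}^{2+\delta}},$$ set $r=A\sqrt{2\log(L)/n}$, and assume $L\le\exp(d_{n,\delta}^2/(2A^2))$. Then with probability at least $1-\alpha$, every solution $(\widehat\beta,\widehat\sigma)$ of the STIV problem (with this $r$ and constant $c\in(0,1)$) satisfies, for all $p\in[1,\infty]$, $$\big|{\bf D_X}^{-1}(\widehat\beta-\beta^* )\big|_p\le\frac{2\widehat\sigma r}{\kappa_{p,J(\beta^* )}}\left(1-\frac{r}{\kappa^*_{J_{\rm end},J(\beta^* )}}-\frac{r^2}{\kappa^*_{J_{\rm end}^c,J(\beta^* )}}\right)_+^{-1},$$ for all $k=1,\dots,K$, $$|\widehat\beta_k-\beta^*_k|\le\frac{2\widehat\sigma r}{x_{k*}\kappa^*_{k,J(\beta^* )}}\left(1-\frac{r}{\kappa^*_{J_{\rm end},J(\beta^* )}}-\frac{r^2}{\kappa^*_{J_{\rm end}^c,J(\beta^* )}}\right)_+^{-1},$$ and $$\widehat\sigma\le\sqrt{\widehat Q(\beta^* )}\left(1+\frac{r}{c\,\kappa^*_{J(\beta^* ),J(\beta^* )}}\right)\left(1-\frac{r}{c\,\kappa^*_{J(\beta^* ),J(\beta^* )}}\right)_+^{-1}.$$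
   Context: Setting: integers $n,K,L$ with $L\ge K$, and $k_{\rm end}\in\{0,\dots,K\}$. For $i=1,\dots,n$ one observes $(y_i,x_i,z_i)$, $y_i\in\mathbb R$, $x_i=(x_{1i},\dots,x_{Ki})^T\in\mathbb R^K$, $z_i=(z_{1i},\dots,z_{Li})^T\in\mathbb R^L$, with $y_i=x_i^T\beta^*+u_i$ for an unknown $\beta^*\in\mathbb R^K$ and unobserved errors $u_i$; the vectors $(y_i,x_i,z_i,u_i)$, $i=1,\dots,n$, are mutually independent (not necessarily identically distributed). $J_{\rm end}=\{1,\dots,k_{\rm end}\}$ (endogenous regressors), $J_{\rm end}^c=\{k_{\rm end}+1,\dots,K\}$, and exogenous regressors are their own instruments: $z_{li}=x_{(k_{\rm end}+l)i}$ for $l=1,\dots,K-k_{\rm end}$. ${\bf Y}=(y_1,\dots,y_n)^T$, ${\bf X}$, ${\bf Z}$ are the $n\times K$, $n\times L$ matrices with rows $x_i^T$, $z_i^T$. $x_{k*}=\max_i|x_{ki}|$, $z_{l*}=\max_i|z_{li}|$ (assumed positive); ${\bf D_X}={\rm diag}(x_{1*}^{-1},\dots,x_{K*}^{-1})$, ${\bf D_Z}={\rm diag}(z_{1*}^{-1},\dots,z_{L*}^{-1})$; $\Psi_n=\frac1n{\bf D_Z}{\bf Z}^T{\bf X}{\bf D_X}$. $\widehat Q(\beta)=\frac1n\sum_i(y_i-x_i^T\beta)^2$. Notation: $J(\beta)=\{k:\beta_k\ne0\}$; for $\Delta\in\mathbb R^K$, $\Delta_J$ has coordinates $\Delta_k\mathbf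 1\{k\in J\}$; $J^c$ complement; $|\cdot|_p$ the $\ell_p$ norm; $a_+=\max(a,0)$, $(a)_+^{-1}=1/a_+$, $a/0=\infty$ for $a>0$, $1/\infty=0$, $0/0=0$. Sensitivities (for $c\in(0,1)$): $C_J=\{\Delta: |\Delta_{J^c}|_1\le\frac{1+c}{1-c}|\Delta_J|_1\}$; $\kappa_{p,J}=\inf\{|\Psi_n\Delta|_\infty:\Delta\in C_J,|\Delta|_p=1\}$; $\kappa^*_{J_0,J}=\inf\{|\Psi_n\Delta|_\infty:\Delta\in C_J,|\Delta_{J_0}|_1=1\}$ with $\kappa^*_{\varnothing,J}=\infty$; $\kappa^*_{k,J}=\kappa^*_{\{k\},J}$. STIV estimator: for $r>0$ and $c\in(0,1)$, let $\widehat{\mathcal I}=\{(\beta,\sigma)\in\mathbb R^K\times(0,\infty): |\frac1n{\bf D_Z}{\bf Z}^T({\bf Y}-{\bf X}\beta)|_\infty\le\sigma r,\ \widehat Q(\beta)\le\sigma^2\}$; a STIV estimator is any minimizer $(\widehat\beta,\widehat\sigma)$ of $|{\bf D_X}^{-1}\beta|_1+c\sigma$ over $\widehat{\mathcal I}$. Assumption 1: for all $i,l$: $\mathbb E[|z_{li}u_i|^{2+\delta}]<\infty$, $\mathbb E[z_{li}u_i]=0$, and $z_{li}u_i$ is not a.s. zero. $d_{n,\delta}=\min_{l}\sqrt{\sum_i\mathbb E[z_{li}^2u_i^2]}\big/\big(\sum_i\mathbb E|z_{li}u_i|^{2+\delta}\big)^{1/(2+\delta)}$. $\Phi$ is the standard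 normal c.d.f., and $A_0>0$ is the absolute constant of the Jing–Shao–Wang moderate deviation bound: for independent mean-zero $X_1,\dots,X_n$ with $0<\mathbb E|X_i|^{2+\delta}<\infty$, $S_n=\sum X_i$, $V_n^2=\sum X_i^2$, $B_n^2=\sum\mathbb E X_i^2$, $d=B_n/(\sum\mathbb E|X_i|^{2+\delta})^{1/(2+\delta)}$, one has $|\mathbb P(S_n/V_n\ge x)-(1-\Phi(x))|\le A_0(1+x)^{1+\delta}e^{-x^2/2}/d^{2+\delta}$ for $0\le x\le d$. *)

theory Defs
  imports "HOL-Probability.Probability"
begin

definition Phi :: "real \<Rightarrow> real" where
  "Phi x = measure (density lborel std_normal_density) {..x}"

text \<open>Vectors are functions nat => real, only coordinates in the relevant index
  range {1..K} (resp. {1..L}, {1..n}) matter.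
  Data at a fixed sample point: Y i = y_i, X k i = x_{ki}, Z l i = z_{li}.\<close>

definition supnorm :: "nat set \<Rightarrow> (nat \<Rightarrow> real) \<Rightarrow> real" where
  "supnorm S f = Max (insert 0 ((\<lambda>k. \<bar>f k\<bar>) ` S))"

definition l1norm :: "nat set \<Rightarrow> (nat \<Rightarrow> real) \<Rightarrow> real" where
  "l1norm S f = (\<Sum>k\<in>S. \<bar>f k\<bar>)"

definition lpnorm :: "nat \<Rightarrow> ereal \<Rightarrow> (nat \<Rightarrow> real) \<Rightarrow> real" where
  "lpnorm K p f = (if p = \<infinity> then supnorm {1..K} f
     else (\<Sum>k\<in>{1..K}. \<bar>f k\<bar> powr real_of_ereal p) powr (1 / real_of_ereal p))"

definition restr :: "nat set \<Rightarrow> (nat \<Rightarrow> real) \<Rightarrow> (nat \<Rightarrow> real)" where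
  "restr J f = (\<lambda>k. if k \<in> J then f k else 0)"

definition xstar :: "nat \<Rightarrow> (nat \<Rightarrow> nat \<Rightarrow> real) \<Rightarrow> nat \<Rightarrow> real" where
  "xstar n X k = Max ((\<lambda>i. \<bar>X k i\<bar>) ` {1..n})"

definition zstar :: "nat \<Rightarrow> (nat \<Rightarrow> nat \<Rightarrow> real) \<Rightarrow> nat \<Rightarrow> real" where
  "zstar n Z l = Max ((\<lambda>i. \<bar>Z l i\<bar>) ` {1..n})"

definition supp :: "nat \<Rightarrow> (nat \<Rightarrow> real) \<Rightarrow> nat set" where
  "supp K b = {k \<in> {1..K}. b k \<noteq> 0}"

definition Psi_app :: "nat \<Rightarrow> nat \<Rightarrow> (nat \<Rightarrow> nat \<Rightarrow> real) \<Rightarrow> (nat \<Rightarrow> nat \<Rightarrow> real)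
    \<Rightarrow> (nat \<Rightarrow> real) \<Rightarrow> (nat \<Rightarrow> real)" where
  "Psi_app n K X Z D = (\<lambda>l. (1 / real n) * (\<Sum>i\<in>{1..n}. (Z l i / zstar n Z l) *
       (\<Sum>k\<in>{1..K}. X k i * D k / xstar n X k)))"

definition cone :: "nat \<Rightarrow> real \<Rightarrow> nat set \<Rightarrow> (nat \<Rightarrow> real) set" where
  "cone K c J = {D. l1norm ({1..K} - J) D \<le> (1 + c) / (1 - c) * l1norm J D}"

text \<open>kappa_{p,J}; the infimum is taken in the extended reals (inf of empty set = infinity)\<close>
definition kappa_p :: "nat \<Rightarrow> nat \<Rightarrow> nat \<Rightarrow> (nat \<Rightarrow> nat \<Rightarrow> real) \<Rightarrow> (nat \<Rightarrow> nat \<Rightarrow> real)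
    \<Rightarrow> real \<Rightarrow> ereal \<Rightarrow> nat set \<Rightarrow> ereal" where
  "kappa_p n K L X Z c p J = (
     Inf ((\<lambda>D. ereal (supnorm {1..L} (Psi_app n K X Z D))) `
          {D \<in> cone K c J. lpnorm K p D = 1}))"

definition kappa_star :: "nat \<Rightarrow> nat \<Rightarrow> nat \<Rightarrow> (nat \<Rightarrow> nat \<Rightarrow> real) \<Rightarrow> (nat \<Rightarrow> nat \<Rightarrow> real)
    \<Rightarrow> real \<Rightarrow> nat set \<Rightarrow> nat set \<Rightarrow> ereal" where
  "kappa_star n K L X Z c J0 J = (if J0 = {} then \<infinity> else
     Inf ((\<lambda>D. ereal (supnorm {1..L} (Psi_app n K X Z D))) `
          {D \<in> cone K c J. l1norm J0 D = 1}))"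

definition Qhat :: "nat \<Rightarrow> nat \<Rightarrow> (nat \<Rightarrow> nat \<Rightarrow> real) \<Rightarrow> (nat \<Rightarrow> real) \<Rightarrow> (nat \<Rightarrow> real) \<Rightarrow> real" where
  "Qhat n K X Y b = (1 / real n) * (\<Sum>i\<in>{1..n}. (Y i - (\<Sum>k\<in>{1..K}. X k i * b k))\<^sup>2)"

definition stiv_feasible :: "nat \<Rightarrow> nat \<Rightarrow> nat \<Rightarrow> (nat \<Rightarrow> nat \<Rightarrow> real) \<Rightarrow> (nat \<Rightarrow> nat \<Rightarrow> real)
    \<Rightarrow> (nat \<Rightarrow> real) \<Rightarrow> real \<Rightarrow> (nat \<Rightarrow> real) \<Rightarrow> real \<Rightarrow> bool" where
  "stiv_feasible n K L X Z Y r b s \<longleftrightarrow> 0 < s \<and>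
     supnorm {1..L} (\<lambda>l. (1 / real n) * (\<Sum>i\<in>{1..n}. Z l i / zstar n Z l *
         (Y i - (\<Sum>k\<in>{1..K}. X k i * b k)))) \<le> s * r \<and>
     Qhat n K X Y b \<le> s\<^sup>2"

definition stiv_obj :: "nat \<Rightarrow> nat \<Rightarrow> (nat \<Rightarrow> nat \<Rightarrow> real) \<Rightarrow> real \<Rightarrow> (nat \<Rightarrow> real) \<Rightarrow> real \<Rightarrow> real" where
  "stiv_obj n K X c b s = (\<Sum>k\<in>{1..K}. xstar n X k * \<bar>b k\<bar>) + c * s"

definition stiv_solution :: "nat \<Rightarrow> nat \<Rightarrow> nat \<Rightarrow> (nat \<Rightarrow> nat \<Rightarrow> real) \<Rightarrow> (nat \<Rightarrow> nat \<Rightarrow> real)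
    \<Rightarrow> (nat \<Rightarrow> real) \<Rightarrow> real \<Rightarrow> real \<Rightarrow> (nat \<Rightarrow> real) \<Rightarrow> real \<Rightarrow> bool" where
  "stiv_solution n K L X Z Y r c b s \<longleftrightarrow> stiv_feasible n K L X Z Y r b s \<and>
     (\<forall>b' s'. stiv_feasible n K L X Z Y r b' s' \<longrightarrow> stiv_obj n K X c b s \<le> stiv_obj n K X c b' s')"

text \<open>a * (D)_+^{-1} for a \<ge> 0: equals infinity when D \<le> 0 (bound is void)\<close>
definition times_posinv :: "ereal \<Rightarrow> ereal \<Rightarrow> ereal" where
  "times_posinv a D = (if D \<le> 0 then \<infinity> else a / D)"

definition d_ndelta :: "'a measure \<Rightarrow> nat \<Rightarrow> nat \<Rightarrow> real \<Rightarrow> (nat \<Rightarrow> nat \<Rightarrow> 'a \<Rightarrow> real)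
    \<Rightarrow> (nat \<Rightarrow> 'a \<Rightarrow> real) \<Rightarrow> real" where
  "d_ndelta M n L \<delta> z u = Min ((\<lambda>l.
      sqrt (\<Sum>i\<in>{1..n}. integral\<^sup>L M (\<lambda>\<omega>. (z l i \<omega> * u i \<omega>)\<^sup>2)) /
      (\<Sum>i\<in>{1..n}. integral\<^sup>L M (\<lambda>\<omega>. \<bar>z l i \<omega> * u i \<omega>\<bar> powr (2 + \<delta>))) powr (1 / (2 + \<delta>)))
    ` {1..L})"

text \<open>A0 satisfies the Jing-Shao-Wang moderate deviation bound (for all families of
  independent random variables on the probability space M and all delta in (0,1]).\<close>
definition jsw_constant :: "'a measure \<Rightarrow> real \<Rightarrow> bool" where
  "jsw_constant M A0 \<longleftrightarrow> (\<forall>(N::nat) (Xs :: nat \<Rightarrow> 'a \<Rightarrow> real) (\<delta>::real).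
     (0 < \<delta> \<and> \<delta> \<le> 1 \<and> 1 \<le> N \<and>
      prob_space.indep_vars M (\<lambda>_. borel) Xs {1..N} \<and>
      (\<forall>i\<in>{1..N}. integrable M (\<lambda>\<omega>. \<bar>Xs i \<omega>\<bar> powr (2 + \<delta>)) \<and>
          0 < integral\<^sup>L M (\<lambda>\<omega>. \<bar>Xs i \<omega>\<bar> powr (2 + \<delta>)) \<and>
          integral\<^sup>L M (Xs i) = 0)) \<longrightarrow>
     (let S = (\<lambda>\<omega>. \<Sum>i\<in>{1..N}. Xs i \<omega>);
          V = (\<lambda>\<omega>. sqrt (\<Sum>i\<in>{1..N}. (Xs i \<omega>)\<^sup>2));
          B = sqrt (\<Sum>i\<in>{1..N}. integral\<^sup>L M (\<lambda>\<omega>. (Xs i \<omega>)\<^sup>2));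
          d = B / (\<Sum>i\<in>{1..N}. integral\<^sup>L M (\<lambda>\<omega>. \<bar>Xs i \<omega>\<bar> powr (2 + \<delta>))) powr (1 / (2 + \<delta>))
      in \<forall>x. 0 \<le> x \<and> x \<le> d \<longrightarrow>
           \<bar>measure M {\<omega> \<in> space M. S \<omega> / V \<omega> \<ge> x} - (1 - Phi x)\<bar>
             \<le> A0 * (1 + x) powr (1 + \<delta>) * exp (- x\<^sup>2 / 2) / d powr (2 + \<delta>)))"

end

theory Submission
  imports Defs
begin

(* The proof splits into a deterministic and a probabilistic half.

   Fix one realisation of the data and
   assume the "good event": every scaled instrument-error correlation
   |(1/n) sum_i z_li u_i / z_l_max| is at most r times sigma0, the root mean square
   error at the true parameter beta.  Then (beta, sigma0) is (almost) feasible, so any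
   solution (b, s) has objective at most that of the truth.  This puts the scaled error
   D = D_X^-1 (b - beta) in the cone C_J, bounds the sup-norm of Psi_n D by
   r (s + sigma0), and, via Cauchy-Schwarz and Qhat b <= s^2, bounds sigma0 - s by
   |D_end|_1 + r |D_exo|_1.  The sensitivities kappa turn these facts into the three
   oracle inequalities (stiv_oracle_inequalities).

   By the Jing-Shao-Wang moderate deviation
   bound, each one-sided tail of each self-normalised sum of the products z_li u_i
   beyond t = A sqrt (2 log L) has probability at most the Gaussian tail plus the JSW
   error term; a union bound over the 2L tails gives exactly the level alpha, and
   outside these tails the good event holds with r = t / sqrt n.  The main theorem
   combines the two halves; the degenerate case L = 1 (where r = 0) is covered because
   then alpha >= 1. *)

lemma supnorm_nonneg: "finite S \<Longrightarrow> 0 \<le> supnorm S f"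
  unfolding supnorm_def by (intro Max_ge) auto

lemma supnorm_ge: "finite S \<Longrightarrow> k \<in> S \<Longrightarrow> \<bar>f k\<bar> \<le> supnorm S f"
  unfolding supnorm_def by (intro Max_ge) auto

lemma supnorm_le:
  "finite S \<Longrightarrow> 0 \<le> B \<Longrightarrow> (\<And>k. k \<in> S \<Longrightarrow> \<bar>f k\<bar> \<le> B) \<Longrightarrow> supnorm S f \<le> B"
  unfolding supnorm_def by (subst Max_le_iff) auto

lemma supnorm_scale:
  assumes "finite S" "0 \<le> t"
  shows "supnorm S (\<lambda>k. t * f k) = t * supnorm S f"
proof -
  have "Max (insert 0 ((\<lambda>k. \<bar>t * f k\<bar>) ` S)) = Max ((*) t ` insert 0 ((\<lambda>k. \<bar>f k\<bar>) ` S))"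
    using assms by (simp add: abs_mult image_image)
  also have "\<dots> = t * Max (insert 0 ((\<lambda>k. \<bar>f k\<bar>) ` S))"
    using assms by (intro mono_Max_commute[symmetric]) (auto simp: mono_def mult_left_mono)
  finally show ?thesis unfolding supnorm_def .
qed

lemma l1norm_nonneg: "0 \<le> l1norm S f"
  unfolding l1norm_def by (simp add: sum_nonneg)

lemma l1norm_scale: "0 \<le> t \<Longrightarrow> l1norm S (\<lambda>k. t * f k) = t * l1norm S f"
  unfolding l1norm_def by (simp add: abs_mult sum_distrib_left)

lemma l1norm_union:
  "finite A \<Longrightarrow> finite B \<Longrightarrow> A \<inter> B = {} \<Longrightarrow> l1norm (A \<union> B) f = l1norm A f + l1norm B f"
  unfolding l1norm_def by (rule sum.union_disjoint)

lemma lpnorm_nonneg: "0 \<le> lpnorm K p f"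
  unfolding lpnorm_def by (simp add: supnorm_nonneg)

lemma lpnorm_scale:
  assumes "0 \<le> t" "1 \<le> p"
  shows "lpnorm K p (\<lambda>k. t * f k) = t * lpnorm K p f"
proof (cases "p = \<infinity>")
  case True
  then show ?thesis using assms by (simp add: lpnorm_def supnorm_scale)
next
  case False
  define q where "q = real_of_ereal p"
  have q1: "1 \<le> q" using assms False unfolding q_def by (cases p) auto
  have "(\<Sum>k\<in>{1..K}. \<bar>t * f k\<bar> powr q) = t powr q * (\<Sum>k\<in>{1..K}. \<bar>f k\<bar> powr q)"
    using assms by (simp add: abs_mult powr_mult sum_distrib_left)
  moreover have "(t powr q * S) powr (1/q) = t * S powr (1/q)" if "0 \<le> S" for S
    using assms q1 that by (simp add: powr_mult powr_powr)
  ultimately show ?thesis using False unfolding lpnorm_def q_def[symmetric]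
    by (simp add: sum_nonneg)
qed

text \<open>The design map \<open>\<Psi>\<^sub>n\<close> is linear and the cone \<open>C\<^sub>J\<close> is closed under
  nonnegative scaling; this is what makes the sensitivities homogeneous.\<close>

lemma Psi_scale: "Psi_app n K X Z (\<lambda>k. t * D k) = (\<lambda>l. t * Psi_app n K X Z D l)"
  unfolding Psi_app_def by (rule ext) (simp add: sum_distrib_left algebra_simps)

lemma cone_scale:
  assumes "D \<in> cone K c J" "0 \<le> t"
  shows "(\<lambda>k. t * D k) \<in> cone K c J"
proof -
  have "t * l1norm ({1..K} - J) D \<le> t * ((1 + c) / (1 - c) * l1norm J D)"
    using assms by (intro mult_left_mono) (auto simp: cone_def)
  then show ?thesis using assms by (simp add: cone_def l1norm_scale mult_ac)
qed

lemma sensitivity_lower_bound: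
  fixes N :: "(nat \<Rightarrow> real) \<Rightarrow> real"
  assumes N_hom: "\<And>t D. 0 \<le> t \<Longrightarrow> N (\<lambda>k. t * D k) = t * N D"
    and N_nonneg: "\<And>D. 0 \<le> N D"
    and D: "D \<in> cone K c J"
  shows "Inf ((\<lambda>D. ereal (supnorm {1..L} (Psi_app n K X Z D))) ` {D \<in> cone K c J. N D = 1})
           * ereal (N D) \<le> ereal (supnorm {1..L} (Psi_app n K X Z D))"
    (is "?\<kappa> * _ \<le> ereal (?P D)")
proof (cases "N D = 0")
  case True
  then show ?thesis by (simp add: supnorm_nonneg zero_ereal_def[symmetric])
next
  case False
  define a where "a = N D"
  have a: "0 < a" using False N_nonneg[of D] unfolding a_def by linarith
  define D' where "D' = (\<lambda>k. (1 / a) * D k)"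
  have "D' \<in> cone K c J" unfolding D'_def using D a by (intro cone_scale) auto
  moreover have "N D' = 1" unfolding D'_def using a N_hom[of "1 / a" D] by (simp add: a_def)
  ultimately have "?\<kappa> \<le> ereal (?P D')" by (auto intro!: Inf_lower)
  also have "?P D' = ?P D / a"
    unfolding D'_def Psi_scale using a supnorm_scale[of "{1..L}" "1 / a" "Psi_app n K X Z D"] by simp
  finally have "?\<kappa> * ereal a \<le> ereal (?P D / a) * ereal a"
    using a by (intro ereal_mult_right_mono) auto
  then show ?thesis using a by (simp add: a_def)
qed

lemma kappa_star_bound:
  assumes "D \<in> cone K c J"
  shows "kappa_star n K L X Z c J0 J * ereal (l1norm J0 D)
           \<le> ereal (supnorm {1..L} (Psi_app n K X Z D))"
proof (cases "J0 = {}")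
  case True
  then show ?thesis by (simp add: l1norm_def supnorm_nonneg zero_ereal_def[symmetric])
next
  case False
  then show ?thesis unfolding kappa_star_def
    using sensitivity_lower_bound[where N = "l1norm J0", OF l1norm_scale l1norm_nonneg assms]
    by simp
qed

lemma kappa_p_bound:
  assumes "D \<in> cone K c J" "1 \<le> p"
  shows "kappa_p n K L X Z c p J * ereal (lpnorm K p D) \<le> ereal (supnorm {1..L} (Psi_app n K X Z D))"
  unfolding kappa_p_def
  using sensitivity_lower_bound[where N = "lpnorm K p", OF _ lpnorm_nonneg assms(1)]
    lpnorm_scale[OF _ assms(2)] by simp

lemma kappa_star_nonneg: "0 \<le> kappa_star n K L X Z c J0 J"
  unfolding kappa_star_def by (auto intro!: Inf_greatest simp: supnorm_nonneg)

lemma kappa_p_nonneg: "0 \<le> kappa_p n K L X Z c p J"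
  unfolding kappa_p_def by (auto intro!: Inf_greatest simp: supnorm_nonneg)

lemma ereal_div_nonneg: "0 < r \<Longrightarrow> 0 \<le> (\<kappa>::ereal) \<Longrightarrow> 0 \<le> ereal r / \<kappa>"
  by (cases \<kappa>) (auto simp: divide_ereal_def)

lemma ereal_div_mult_const: "0 < c \<Longrightarrow> 0 < r \<Longrightarrow> ereal r / (ereal c * \<kappa>) = ereal (r / c) / \<kappa>"
  by (cases \<kappa>) (auto simp: divide_ereal_def field_simps)

lemma mult_le_by_sensitivity:
  fixes \<kappa> :: ereal
  assumes "0 < \<rho>" "0 \<le> \<kappa>" "\<kappa> * ereal v \<le> ereal P" "0 \<le> v" "ereal \<rho> / \<kappa> = ereal a"
  shows "\<rho> * v \<le> a * P"
proof (cases \<kappa>)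
  case (real k)
  then have k: "0 < k" using assms by (cases "k = 0") (auto simp: divide_ereal_def)
  have a: "a = \<rho> / k" and kv: "k * v \<le> P" using assms real k by auto
  have "\<rho> * v = a * (k * v)" using k a by simp
  also have "\<dots> \<le> a * P" using kv a k assms by (intro mult_left_mono) auto
  finally show ?thesis .
next
  case PInf
  then show ?thesis using assms by (cases "v = 0") auto
qed (use assms in auto)

lemma le_div_by_sensitivity:
  fixes \<kappa> :: ereal
  assumes "0 \<le> \<kappa>" "\<kappa> * ereal v \<le> ereal P" "0 \<le> v" "P \<le> N / D" "0 < D" "0 < N"
  shows "ereal v \<le> (ereal N / \<kappa>) / ereal D"
proof (cases \<kappa>)
  case (real k)
  show ?thesis
  proof (cases "k = 0")
    case True
    then show ?thesis using assms real by (simp add: divide_ereal_def)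
  next
    case False
    then have k: "0 < k" using assms real by auto
    have "v \<le> P / k" using assms real k by (simp add: field_simps)
    also have "\<dots> \<le> (N / D) / k" using assms k by (intro divide_right_mono) auto
    finally show ?thesis using k assms real by (simp add: field_simps)
  qed
next
  case PInf
  then show ?thesis using assms by (cases "v = 0") auto
qed (use assms in auto)

lemma positive_denominator_finite:
  fixes a1 a2 :: ereal
  assumes "0 \<le> a1" "0 \<le> a2" "\<not> 1 - a1 - a2 \<le> 0"
  obtains A1 A2 where "a1 = ereal A1" "a2 = ereal A2" "0 \<le> A1" "0 \<le> A2" "A1 + A2 < 1"
  using assms by (cases a1; cases a2) (auto simp: one_ereal_def)

lemma sum_mult_le_sqrt_sums:
  fixes a b :: "nat \<Rightarrow> real"
  shows "(\<Sum>i\<in>I. a i * b i) \<le> sqrt (\<Sum>i\<in>I. (a i)\<^sup>2) * sqrt (\<Sum>i\<in>I. (b i)\<^sup>2)"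
proof -
  have "(\<Sum>i\<in>I. a i * b i) \<le> sqrt ((\<Sum>i\<in>I. a i * b i)\<^sup>2)" by simp
  also have "\<dots> \<le> sqrt ((\<Sum>i\<in>I. (a i)\<^sup>2) * (\<Sum>i\<in>I. (b i)\<^sup>2))"
    by (intro real_sqrt_le_mono Cauchy_Schwarz_ineq_sum)
  finally show ?thesis by (simp add: real_sqrt_mult)
qed

definition iv_score :: "nat \<Rightarrow> nat \<Rightarrow> (nat \<Rightarrow> nat \<Rightarrow> real) \<Rightarrow> (nat \<Rightarrow> nat \<Rightarrow> real)
    \<Rightarrow> (nat \<Rightarrow> real) \<Rightarrow> (nat \<Rightarrow> real) \<Rightarrow> nat \<Rightarrow> real" where
  "iv_score n K X Z Y b = (\<lambda>l. (1 / real n) * (\<Sum>i\<in>{1..n}. Z l i / zstar n Z l *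
       (Y i - (\<Sum>k\<in>{1..K}. X k i * b k))))"

lemma stiv_feasible_iff:
  "stiv_feasible n K L X Z Y r b s \<longleftrightarrow>
     0 < s \<and> supnorm {1..L} (iv_score n K X Z Y b) \<le> s * r \<and> Qhat n K X Y b \<le> s\<^sup>2"
  unfolding stiv_feasible_def iv_score_def ..

locale stiv_good_sample =
  fixes n K L kend :: nat and X Z :: "nat \<Rightarrow> nat \<Rightarrow> real" and Y U beta :: "nat \<Rightarrow> real"
    and c r :: real
  assumes n_pos: "1 \<le> n" and LK: "K \<le> L" and kend: "kend \<le> K"
    and model: "\<forall>i\<in>{1..n}. Y i = (\<Sum>k\<in>{1..K}. X k i * beta k) + U i"
    and exo: "\<forall>l\<in>{1..K - kend}. \<forall>i\<in>{1..n}. Z l i = X (kend + l) i"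
    and xpos: "\<forall>k\<in>{1..K}. 0 < xstar n X k"
    and c: "0 < c" "c < 1" and r: "0 < r" "r \<le> 1"
    and score_small: "\<forall>l\<in>{1..L}. \<bar>(1 / real n) * (\<Sum>i\<in>{1..n}. Z l i / zstar n Z l * U i)\<bar>
               \<le> r * sqrt ((1 / real n) * (\<Sum>i\<in>{1..n}. (U i)\<^sup>2))"
begin

abbreviation J :: "nat set" where "J \<equiv> supp K beta"

definition sigma0 :: real where "sigma0 = sqrt (Qhat n K X Y beta)"

definition err :: "(nat \<Rightarrow> real) \<Rightarrow> nat \<Rightarrow> real" where
  "err b = (\<lambda>k. xstar n X k * (b k - beta k))"

definition noise_corr :: "nat \<Rightarrow> real" where
  "noise_corr k = (1 / real n) * (\<Sum>i\<in>{1..n}. U i * X k i / xstar n X k)"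

definition denom :: ereal where
  "denom = 1 - ereal r / kappa_star n K L X Z c {1..kend} J
             - ereal (r\<^sup>2) / kappa_star n K L X Z c {kend+1..K} J"

lemma Qhat_beta: "Qhat n K X Y beta = (1 / real n) * (\<Sum>i\<in>{1..n}. (U i)\<^sup>2)"
  unfolding Qhat_def using model by (auto intro!: sum.cong)

lemma sigma0_nonneg: "0 \<le> sigma0"
  unfolding sigma0_def Qhat_beta by (simp add: sum_nonneg)

lemma sigma0_sq: "sigma0\<^sup>2 = (1 / real n) * (\<Sum>i\<in>{1..n}. (U i)\<^sup>2)"
  unfolding sigma0_def Qhat_beta by (simp add: sum_nonneg)

lemma score_beta_bound:
  assumes "l \<in> {1..L}"
  shows "\<bar>iv_score n K X Z Y beta l\<bar> \<le> r * sigma0"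
proof -
  have "iv_score n K X Z Y beta l = (1 / real n) * (\<Sum>i\<in>{1..n}. Z l i / zstar n Z l * U i)"
    unfolding iv_score_def using model by (auto intro!: sum.cong arg_cong[where f="\<lambda>x. _ * x"])
  then show ?thesis using score_small assms unfolding sigma0_def Qhat_beta by auto
qed

lemma Psi_err: "Psi_app n K X Z (err b) l = iv_score n K X Z Y beta l - iv_score n K X Z Y b l"
proof -
  have fit: "(\<Sum>k\<in>{1..K}. X k i * err b k / xstar n X k)
      = (Y i - (\<Sum>k\<in>{1..K}. X k i * beta k)) - (Y i - (\<Sum>k\<in>{1..K}. X k i * b k))" for i
  proof -
    have "(\<Sum>k\<in>{1..K}. X k i * err b k / xstar n X k) = (\<Sum>k\<in>{1..K}. X k i * b k - X k i * beta k)"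
      using xpos by (intro sum.cong) (auto simp: err_def field_simps dest!: bspec less_imp_neq)
    then show ?thesis by (simp add: sum_subtractf)
  qed
  show ?thesis
    unfolding Psi_app_def iv_score_def fit by (simp add: right_diff_distrib sum_subtractf)
qed

lemma truth_feasible:
  assumes "sigma0 \<le> s'" "0 < s'"
  shows "stiv_feasible n K L X Z Y r beta s'"
  unfolding stiv_feasible_iff
proof (intro conjI)
  have "supnorm {1..L} (iv_score n K X Z Y beta) \<le> r * sigma0"
    using score_beta_bound r sigma0_nonneg by (intro supnorm_le) auto
  also have "\<dots> \<le> s' * r" using assms r by (simp add: mult.commute)
  finally show "supnorm {1..L} (iv_score n K X Z Y beta) \<le> s' * r" .
  have "Qhat n K X Y beta = sigma0\<^sup>2" unfolding sigma0_def Qhat_beta by (simp add: sum_nonneg)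
  also have "\<dots> \<le> s'\<^sup>2" using assms sigma0_nonneg by (intro power_mono) auto
  finally show "Qhat n K X Y beta \<le> s'\<^sup>2" .
qed (use assms in auto)

lemma penalty_support_split:
  "(\<Sum>k\<in>{1..K}. xstar n X k * \<bar>beta k\<bar>) + l1norm ({1..K} - J) (err b)
     \<le> (\<Sum>k\<in>{1..K}. xstar n X k * \<bar>b k\<bar>) + l1norm J (err b)"
proof -
  have Jsub: "J \<subseteq> {1..K}" by (auto simp: supp_def)
  have split: "(\<Sum>k\<in>{1..K}. f k) = (\<Sum>k\<in>J. f k) + (\<Sum>k\<in>{1..K} - J. f k)" for f :: "nat \<Rightarrow> real"
    using Jsub by (metis add.commute finite_atLeastAtMost sum.subset_diff)
  have outside: "(\<Sum>k\<in>{1..K} - J. xstar n X k * \<bar>b k\<bar>) = l1norm ({1..K} - J) (err b)"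
    unfolding l1norm_def err_def using xpos
    by (intro sum.cong) (auto simp: supp_def abs_mult dest!: bspec less_imp_le)
  have beta_outside: "(\<Sum>k\<in>{1..K} - J. xstar n X k * \<bar>beta k\<bar>) = 0"
    by (intro sum.neutral) (auto simp: supp_def)
  have inside: "(\<Sum>k\<in>J. xstar n X k * \<bar>beta k\<bar>) \<le> (\<Sum>k\<in>J. xstar n X k * \<bar>b k\<bar> + \<bar>err b k\<bar>)"
  proof (rule sum_mono)
    fix k assume "k \<in> J"
    then have xk: "0 < xstar n X k" using Jsub xpos by auto
    have "xstar n X k * \<bar>beta k\<bar> \<le> xstar n X k * (\<bar>b k\<bar> + \<bar>b k - beta k\<bar>)"
      using xk by (intro mult_left_mono) linarith+
    moreover have "\<bar>err b k\<bar> = xstar n X k * \<bar>b k - beta k\<bar>" using xk by (simp add: err_def abs_mult)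
    ultimately show "xstar n X k * \<bar>beta k\<bar> \<le> xstar n X k * \<bar>b k\<bar> + \<bar>err b k\<bar>"
      by (simp add: distrib_left)
  qed
  show ?thesis
    using inside outside beta_outside split[of "\<lambda>k. xstar n X k * \<bar>b k\<bar>"]
      split[of "\<lambda>k. xstar n X k * \<bar>beta k\<bar>"]
    by (simp add: l1norm_def sum.distrib)
qed

text \<open>By Cauchy--Schwarz the mean absolute error is at most \<open>\<sigma>\<^sup>*\<close>; as \<open>|x\<^sub>k\<^sub>i| \<le> x\<^sub>k\<^sub>*\<close>
  this bounds every correlation, and for exogenous regressors (which are instruments)
  the good event gives the sharper bound \<open>r \<sigma>\<^sup>*\<close>.\<close>

lemma mean_abs_noise_le: "(1 / real n) * (\<Sum>i\<in>{1..n}. \<bar>U i\<bar>) \<le> sigma0"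
proof -
  have n: "0 < real n" using n_pos by simp
  have "(\<Sum>i\<in>{1..n}. \<bar>U i\<bar> * 1) \<le> sqrt (\<Sum>i\<in>{1..n}. \<bar>U i\<bar>\<^sup>2) * sqrt (\<Sum>i\<in>{1..n}. 1\<^sup>2)"
    by (rule sum_mult_le_sqrt_sums)
  then have "(1 / real n) * (\<Sum>i\<in>{1..n}. \<bar>U i\<bar>)
      \<le> (1 / real n) * (sqrt (\<Sum>i\<in>{1..n}. (U i)\<^sup>2) * sqrt (real n))"
    using n by (intro mult_left_mono) auto
  also have "\<dots> = sqrt ((1 / real n) * (\<Sum>i\<in>{1..n}. (U i)\<^sup>2))"
    using n by (simp add: real_sqrt_mult real_sqrt_divide field_simps)
  finally show ?thesis unfolding sigma0_def Qhat_beta .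
qed

lemma noise_corr_le:
  assumes "k \<in> {1..K}"
  shows "\<bar>noise_corr k\<bar> \<le> sigma0"
proof -
  have xk: "0 < xstar n X k" using xpos assms by auto
  have "\<bar>noise_corr k\<bar> = (1 / real n) * \<bar>\<Sum>i\<in>{1..n}. U i * X k i / xstar n X k\<bar>"
    unfolding noise_corr_def by (simp add: abs_mult)
  also have "\<dots> \<le> (1 / real n) * (\<Sum>i\<in>{1..n}. \<bar>U i * X k i / xstar n X k\<bar>)"
    by (intro mult_left_mono sum_abs) auto
  also have "\<dots> \<le> (1 / real n) * (\<Sum>i\<in>{1..n}. \<bar>U i\<bar>)"
  proof (intro mult_left_mono sum_mono)
    fix i assume "i \<in> {1..n}"
    then have "\<bar>X k i\<bar> \<le> xstar n X k" unfolding xstar_def by (intro Max_ge) auto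
    then have "\<bar>U i\<bar> * (\<bar>X k i\<bar> / xstar n X k) \<le> \<bar>U i\<bar> * 1"
      using xk by (intro mult_left_mono) auto
    then show "\<bar>U i * X k i / xstar n X k\<bar> \<le> \<bar>U i\<bar>" using xk by (simp add: abs_mult)
  qed simp
  finally show ?thesis using mean_abs_noise_le by linarith
qed

lemma noise_corr_exo_le:
  assumes "k \<in> {kend+1..K}"
  shows "\<bar>noise_corr k\<bar> \<le> r * sigma0"
proof -
  define l where "l = k - kend"
  have l: "l \<in> {1..K - kend}" "k = kend + l" using assms unfolding l_def by auto
  then have "l \<in> {1..L}" using LK by auto
  have XZ: "X k i = Z l i" if "i \<in> {1..n}" for i using exo l that by auto
  then have "xstar n X k = zstar n Z l"
    unfolding xstar_def zstar_def by (intro arg_cong[where f=Max] image_cong) auto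
  then have "noise_corr k = (1 / real n) * (\<Sum>i\<in>{1..n}. Z l i / zstar n Z l * U i)"
    unfolding noise_corr_def using XZ by (auto intro!: sum.cong arg_cong[where f="\<lambda>x. _ * x"])
  then show ?thesis using score_small \<open>l \<in> {1..L}\<close> unfolding sigma0_def Qhat_beta by auto
qed

lemma noise_corr_pairing:
  "(\<Sum>k\<in>{1..K}. D k * noise_corr k)
     \<le> sigma0 * (l1norm {1..kend} D + r * l1norm {kend+1..K} D)"
proof -
  have split: "{1..K} = {1..kend} \<union> {kend+1..K}" using kend by auto
  have "(\<Sum>k\<in>{1..K}. D k * noise_corr k) \<le> (\<Sum>k\<in>{1..K}. \<bar>D k\<bar> * \<bar>noise_corr k\<bar>)"
    by (rule sum_mono) (simp add: abs_mult[symmetric])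
  also have "\<dots> = (\<Sum>k\<in>{1..kend}. \<bar>D k\<bar> * \<bar>noise_corr k\<bar>) + (\<Sum>k\<in>{kend+1..K}. \<bar>D k\<bar> * \<bar>noise_corr k\<bar>)"
    by (subst split, rule sum.union_disjoint) auto
  also have "\<dots> \<le> (\<Sum>k\<in>{1..kend}. \<bar>D k\<bar> * sigma0) + (\<Sum>k\<in>{kend+1..K}. \<bar>D k\<bar> * (r * sigma0))"
    using noise_corr_le noise_corr_exo_le kend
    by (intro add_mono sum_mono mult_left_mono) auto
  also have "\<dots> = sigma0 * (l1norm {1..kend} D + r * l1norm {kend+1..K} D)"
    by (simp add: l1norm_def sum_distrib_left sum_distrib_right algebra_simps)
  finally show ?thesis .
qed

lemma noise_fit_eq:
  "(1 / real n) * (\<Sum>i\<in>{1..n}. U i * (\<Sum>k\<in>{1..K}. X k i * (b k - beta k)))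
     = (\<Sum>k\<in>{1..K}. err b k * noise_corr k)"
proof -
  have "(\<Sum>i\<in>{1..n}. U i * (\<Sum>k\<in>{1..K}. X k i * (b k - beta k)))
      = (\<Sum>i\<in>{1..n}. \<Sum>k\<in>{1..K}. err b k * (U i * X k i / xstar n X k))"
    unfolding err_def using xpos by (auto simp: sum_distrib_left intro!: sum.cong)
  also have "\<dots> = (\<Sum>k\<in>{1..K}. err b k * (\<Sum>i\<in>{1..n}. U i * X k i / xstar n X k))"
    by (subst sum.swap) (simp add: sum_distrib_left)
  finally show ?thesis unfolding noise_corr_def by (simp add: sum_distrib_left algebra_simps)
qed

context
  fixes b :: "nat \<Rightarrow> real" and s :: real
  assumes sol: "stiv_solution n K L X Z Y r c b s"
begin

lemma solution_feasible:
  "0 < s" "supnorm {1..L} (iv_score n K X Z Y b) \<le> s * r" "Qhat n K X Y b \<le> s\<^sup>2"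
  using sol by (auto simp: stiv_solution_def stiv_feasible_iff)

lemma Psi_err_bound: "supnorm {1..L} (Psi_app n K X Z (err b)) \<le> r * (s + sigma0)"
proof (rule supnorm_le)
  fix l assume l: "l \<in> {1..L}"
  have "\<bar>Psi_app n K X Z (err b) l\<bar> \<le> \<bar>iv_score n K X Z Y beta l\<bar> + \<bar>iv_score n K X Z Y b l\<bar>"
    unfolding Psi_err by simp
  also have "\<dots> \<le> r * sigma0 + s * r"
    using score_beta_bound[OF l] supnorm_ge[of "{1..L}" l "iv_score n K X Z Y b"] l
      solution_feasible(2) by auto
  finally show "\<bar>Psi_app n K X Z (err b) l\<bar> \<le> r * (s + sigma0)" by (simp add: algebra_simps)
qed (use r solution_feasible(1) sigma0_nonneg in auto)

text \<open>The truth is (almost) feasible, so the optimal objective is at most its value.\<close>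

lemma obj_le_truth: "stiv_obj n K X c b s \<le> stiv_obj n K X c beta sigma0"
proof (rule field_le_epsilon)
  fix e :: real assume e: "0 < e"
  have "stiv_feasible n K L X Z Y r beta (sigma0 + e / c)"
    using c e sigma0_nonneg by (intro truth_feasible) (auto simp: add_nonneg_pos)
  then have "stiv_obj n K X c b s \<le> stiv_obj n K X c beta (sigma0 + e / c)"
    using sol by (auto simp: stiv_solution_def)
  then show "stiv_obj n K X c b s \<le> stiv_obj n K X c beta sigma0 + e"
    using c by (simp add: stiv_obj_def algebra_simps)
qed

lemma l1_off_support_bound: "l1norm ({1..K} - J) (err b) \<le> l1norm J (err b) + c * (sigma0 - s)"
  using obj_le_truth penalty_support_split[of b] unfolding stiv_obj_def by (simp add: algebra_simps)

text \<open>The second constraint \<open>Q\<^sup>^(b) \<le> s\<^sup>2\<close> together with Cauchy--Schwarz shows that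
  \<open>s\<close> cannot underestimate \<open>\<sigma>\<^sup>*\<close> by more than a weighted norm of the error.\<close>

lemma sigma0_minus_s_bound:
  "sigma0 - s \<le> l1norm {1..kend} (err b) + r * l1norm {kend+1..K} (err b)"
proof -
  define w where "w i = (\<Sum>k\<in>{1..K}. X k i * (b k - beta k))" for i
  define R where "R = l1norm {1..kend} (err b) + r * l1norm {kend+1..K} (err b)"
  have n: "0 < real n" using n_pos by simp
  have residual: "Y i - (\<Sum>k\<in>{1..K}. X k i * b k) = U i - w i" if "i \<in> {1..n}" for i
    using model that unfolding w_def by (simp add: sum_subtractf right_diff_distrib)
  have Qb: "Qhat n K X Y b = (1 / real n) * (\<Sum>i\<in>{1..n}. (U i - w i)\<^sup>2)"
    unfolding Qhat_def using residual by (auto intro!: sum.cong arg_cong[where f="\<lambda>x. _ * x"])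
  have "(1 / real n) * (\<Sum>i\<in>{1..n}. U i * (U i - w i))
      \<le> (1 / real n) * (sqrt (\<Sum>i\<in>{1..n}. (U i)\<^sup>2) * sqrt (\<Sum>i\<in>{1..n}. (U i - w i)\<^sup>2))"
    using n by (intro mult_left_mono sum_mult_le_sqrt_sums) auto
  also have "\<dots> = sigma0 * sqrt (Qhat n K X Y b)"
    unfolding sigma0_def Qhat_beta Qb using n by (simp add: real_sqrt_mult real_sqrt_divide)
  also have "\<dots> \<le> sigma0 * s"
    using solution_feasible sigma0_nonneg
    by (intro mult_left_mono) (auto simp: real_le_lsqrt)
  finally have CS: "(1 / real n) * (\<Sum>i\<in>{1..n}. U i * (U i - w i)) \<le> sigma0 * s" .
  have "(1 / real n) * (\<Sum>i\<in>{1..n}. U i * (U i - w i))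
      = sigma0\<^sup>2 - (\<Sum>k\<in>{1..K}. err b k * noise_corr k)"
    unfolding sigma0_sq noise_fit_eq[symmetric] w_def
    by (simp add: right_diff_distrib sum_subtractf power2_eq_square)
  then have "sigma0 * sigma0 \<le> sigma0 * (s + R)"
    using CS noise_corr_pairing[of "err b"] unfolding R_def
    by (simp add: power2_eq_square algebra_simps)
  moreover have "0 \<le> R" unfolding R_def using r by (simp add: l1norm_nonneg)
  ultimately show ?thesis
    using sigma0_nonneg solution_feasible(1) unfolding R_def[symmetric]
    by (cases "sigma0 = 0") (auto simp: mult_le_cancel_left_pos)
qed

lemma err_in_cone: "err b \<in> cone K c J"
proof -
  have end_exo: "{1..K} = {1..kend} \<union> {kend+1..K}" using kend by auto
  have support: "{1..K} = J \<union> ({1..K} - J)" by (auto simp: supp_def)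
  have "l1norm {1..K} (err b) = l1norm {1..kend} (err b) + l1norm {kend+1..K} (err b)"
    by (subst end_exo, rule l1norm_union) auto
  moreover have "l1norm {1..K} (err b) = l1norm J (err b) + l1norm ({1..K} - J) (err b)"
    by (subst support, rule l1norm_union) (auto simp: supp_def)
  moreover have "r * l1norm {kend+1..K} (err b) \<le> l1norm {kend+1..K} (err b)"
    using r l1norm_nonneg by (simp add: mult_left_le_one_le)
  ultimately have "sigma0 - s \<le> l1norm J (err b) + l1norm ({1..K} - J) (err b)"
    using sigma0_minus_s_bound by linarith
  then have "c * (sigma0 - s) \<le> c * (l1norm J (err b) + l1norm ({1..K} - J) (err b))"
    using c by (intro mult_left_mono) auto
  then have "(1 - c) * l1norm ({1..K} - J) (err b) \<le> (1 + c) * l1norm J (err b)"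
    using l1_off_support_bound by (simp add: algebra_simps)
  then show ?thesis unfolding cone_def using c by (simp add: field_simps)
qed

text \<open>The sensitivities turn the
  bound on \<open>\<sigma>\<^sup>* - s\<close> into a bound on \<open>\<sigma>\<^sup>* + s\<close> in terms of \<open>s\<close> alone.\<close>

lemma Psi_err_le_denom:
  assumes pos: "\<not> denom \<le> 0"
  obtains D where "denom = ereal D" "0 < D"
    "supnorm {1..L} (Psi_app n K X Z (err b)) \<le> 2 * s * r / D"
proof -
  define P where "P = supnorm {1..L} (Psi_app n K X Z (err b))"
  define k1 where "k1 = kappa_star n K L X Z c {1..kend} J"
  define k2 where "k2 = kappa_star n K L X Z c {kend+1..K} J"
  have r2: "0 < r\<^sup>2" using r by simp
  have k: "0 \<le> k1" "0 \<le> k2" unfolding k1_def k2_def by (auto intro: kappa_star_nonneg)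
  obtain A1 A2 where A: "ereal r / k1 = ereal A1" "ereal (r\<^sup>2) / k2 = ereal A2"
      "0 \<le> A1" "0 \<le> A2" "A1 + A2 < 1"
    using positive_denominator_finite[OF ereal_div_nonneg[OF r(1) k(1)] ereal_div_nonneg[OF r2 k(2)]]
      pos unfolding denom_def k1_def k2_def by metis
  have Pb: "P \<le> r * (s + sigma0)" unfolding P_def by (rule Psi_err_bound)
  have "r * l1norm {1..kend} (err b) \<le> A1 * P"
    using mult_le_by_sensitivity[OF r(1) k(1) _ l1norm_nonneg A(1)]
      kappa_star_bound[OF err_in_cone] unfolding k1_def P_def by blast
  also have "\<dots> \<le> r * (A1 * (s + sigma0))"
    using Pb A(3) mult_left_mono[OF Pb A(3)] by (simp add: algebra_simps)
  finally have end_bound: "l1norm {1..kend} (err b) \<le> A1 * (s + sigma0)" using r by simp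
  have "r * (r * l1norm {kend+1..K} (err b)) \<le> A2 * P"
    using mult_le_by_sensitivity[OF r2 k(2) _ l1norm_nonneg A(2)]
      kappa_star_bound[OF err_in_cone] unfolding k2_def P_def
    by (simp add: power2_eq_square mult.assoc)
  also have "\<dots> \<le> r * (A2 * (s + sigma0))"
    using mult_left_mono[OF Pb A(4)] by (simp add: algebra_simps)
  finally have exo_bound: "r * l1norm {kend+1..K} (err b) \<le> A2 * (s + sigma0)" using r by simp
  have "sigma0 - s \<le> (A1 + A2) * (s + sigma0)"
    using sigma0_minus_s_bound end_bound exo_bound by (simp add: algebra_simps)
  then have "(s + sigma0) * (1 - (A1 + A2)) \<le> 2 * s" by (simp add: algebra_simps)
  then have "s + sigma0 \<le> 2 * s / (1 - (A1 + A2))" using A(5) by (simp add: field_simps)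
  then have "P \<le> r * (2 * s / (1 - (A1 + A2)))"
    using Pb r by (meson mult_left_mono order.trans less_imp_le)
  then have "P \<le> 2 * s * r / (1 - (A1 + A2))" by (simp add: mult_ac)
  moreover have "denom = ereal (1 - (A1 + A2))"
    unfolding denom_def k1_def[symmetric] k2_def[symmetric] A(1,2) by (simp add: one_ereal_def)
  ultimately show ?thesis using that A(5) unfolding P_def by simp
qed

text \<open>The \<open>\<ell>\<^sub>p\<close> and coordinatewise error bounds: divide the bound on \<open>\<Psi>\<^sub>n\<close> of the
  error by the corresponding sensitivity.\<close>

lemma lp_error_bound:
  assumes p: "1 \<le> p"
  shows "ereal (lpnorm K p (err b))
           \<le> times_posinv (ereal (2 * s * r) / kappa_p n K L X Z c p J) denom"
proof (cases "denom \<le> 0")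
  case True
  then show ?thesis by (simp add: times_posinv_def)
next
  case False
  then obtain D where D: "denom = ereal D" "0 < D"
    and P: "supnorm {1..L} (Psi_app n K X Z (err b)) \<le> 2 * s * r / D"
    by (rule Psi_err_le_denom)
  have "0 < 2 * s * r" using solution_feasible(1) r by simp
  then have "ereal (lpnorm K p (err b)) \<le> (ereal (2 * s * r) / kappa_p n K L X Z c p J) / ereal D"
    using le_div_by_sensitivity[OF kappa_p_nonneg kappa_p_bound[OF err_in_cone p]
        lpnorm_nonneg P D(2)] by blast
  then show ?thesis using False D by (simp add: times_posinv_def)
qed

lemma coordinate_error_bound:
  assumes k: "k \<in> {1..K}"
  shows "ereal \<bar>b k - beta k\<bar>
    \<le> times_posinv (ereal (2 * s * r) / (ereal (xstar n X k) * kappa_star n K L X Z c {k} J)) denom"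
proof (cases "denom \<le> 0")
  case True
  then show ?thesis by (simp add: times_posinv_def)
next
  case False
  then obtain D where D: "denom = ereal D" "0 < D"
    and P: "supnorm {1..L} (Psi_app n K X Z (err b)) \<le> 2 * s * r / D"
    by (rule Psi_err_le_denom)
  define \<kappa> where "\<kappa> = ereal (xstar n X k) * kappa_star n K L X Z c {k} J"
  have xk: "0 < xstar n X k" using xpos k by auto
  have "l1norm {k} (err b) = xstar n X k * \<bar>b k - beta k\<bar>"
    unfolding l1norm_def err_def using xk by (simp add: abs_mult)
  then have "\<kappa> * ereal \<bar>b k - beta k\<bar> = kappa_star n K L X Z c {k} J * ereal (l1norm {k} (err b))"
    unfolding \<kappa>_def by (simp only: times_ereal.simps(1)[symmetric] mult_ac)
  then have "\<kappa> * ereal \<bar>b k - beta k\<bar> \<le> ereal (supnorm {1..L} (Psi_app n K X Z (err b)))"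
    using kappa_star_bound[OF err_in_cone] by simp
  moreover have "0 \<le> \<kappa>" unfolding \<kappa>_def using xk kappa_star_nonneg by simp
  moreover have "0 < 2 * s * r" using solution_feasible(1) r by simp
  ultimately have "ereal \<bar>b k - beta k\<bar> \<le> (ereal (2 * s * r) / \<kappa>) / ereal D"
    using le_div_by_sensitivity P D(2) by (meson abs_ge_zero)
  then show ?thesis using False D unfolding \<kappa>_def by (simp add: times_posinv_def)
qed

text \<open>Upper bound on the estimated noise level: optimality of \<open>(b, s)\<close> gives
  \<open>c s \<le> c \<sigma>\<^sup>* + |err_J|\<^sub>1\<close>, and \<open>\<kappa>\<^sup>*\<^sub>J\<^sub>,\<^sub>J\<close> controls \<open>|err_J|\<^sub>1\<close> by \<open>r (s + \<sigma>\<^sup>*)\<close>.\<close>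

lemma noise_level_bound:
  defines "kJJ \<equiv> kappa_star n K L X Z c J J"
  shows "ereal s \<le> times_posinv (ereal sigma0 * (1 + ereal r / (ereal c * kJJ)))
                                (1 - ereal r / (ereal c * kJJ))"
proof (cases "1 - ereal r / (ereal c * kJJ) \<le> 0")
  case True
  then show ?thesis by (simp add: times_posinv_def)
next
  case False
  have kJJ: "0 \<le> kJJ" unfolding kJJ_def by (rule kappa_star_nonneg)
  have rc: "0 < r / c" using r c by simp
  have ratio: "ereal r / (ereal c * kJJ) = ereal (r / c) / kJJ"
    using c(1) r(1) by (rule ereal_div_mult_const)
  have "\<not> 1 - ereal (r / c) / kJJ - 0 \<le> 0" using False ratio by simp
  then obtain B B' where B: "ereal (r / c) / kJJ = ereal B" "0 \<le> B"
    and B': "0 = ereal B'" "B + B' < 1"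
    by (rule positive_denominator_finite[OF ereal_div_nonneg[OF rc kJJ] order.refl])
  then have "B < 1" by (simp add: zero_ereal_def)
  have "r / c * l1norm J (err b) \<le> B * supnorm {1..L} (Psi_app n K X Z (err b))"
    using mult_le_by_sensitivity[OF rc kJJ _ l1norm_nonneg B(1)]
      kappa_star_bound[OF err_in_cone] unfolding kJJ_def by blast
  also have "\<dots> \<le> B * (r * (s + sigma0))"
    using Psi_err_bound B(2) by (rule mult_left_mono)
  finally have "r * l1norm J (err b) \<le> r * (c * B * (s + sigma0))"
    using r c by (simp add: field_simps)
  then have "l1norm J (err b) \<le> c * B * (s + sigma0)" using r by simp
  then have "c * s \<le> c * (sigma0 + B * (s + sigma0))"
    using l1_off_support_bound l1norm_nonneg[of "{1..K} - J" "err b"]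
    by (simp add: algebra_simps)
  then have "s \<le> sigma0 + B * (s + sigma0)" using c by simp
  then have "s * (1 - B) \<le> sigma0 * (1 + B)" by (simp add: algebra_simps)
  then have "s \<le> sigma0 * (1 + B) / (1 - B)" using \<open>B < 1\<close> by (simp add: field_simps)
  then show ?thesis using False B \<open>B < 1\<close> by (simp add: times_posinv_def ratio one_ereal_def)
qed

end

theorem stiv_oracle_inequalities:
  assumes "stiv_solution n K L X Z Y r c b s"
  shows "(\<forall>p::ereal. 1 \<le> p \<longrightarrow>
            ereal (lpnorm K p (\<lambda>k. xstar n X k * (b k - beta k)))
              \<le> times_posinv (ereal (2 * s * r) / kappa_p n K L X Z c p J)
                   (1 - ereal r / kappa_star n K L X Z c {1..kend} J
                      - ereal (r\<^sup>2) / kappa_star n K L X Z c {kend+1..K} J))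
       \<and> (\<forall>k\<in>{1..K}. ereal \<bar>b k - beta k\<bar>
              \<le> times_posinv (ereal (2 * s * r) / (ereal (xstar n X k) * kappa_star n K L X Z c {k} J))
                   (1 - ereal r / kappa_star n K L X Z c {1..kend} J
                      - ereal (r\<^sup>2) / kappa_star n K L X Z c {kend+1..K} J))
       \<and> ereal s \<le> times_posinv
              (ereal (sqrt (Qhat n K X Y beta)) * (1 + ereal r / (ereal c * kappa_star n K L X Z c J J)))
              (1 - ereal r / (ereal c * kappa_star n K L X Z c J J))"
  using lp_error_bound[OF assms] coordinate_error_bound[OF assms] noise_level_bound[OF assms]
  unfolding err_def sigma0_def denom_def by blast

end

lemma jsw_upper_tail:
  fixes M :: "'a measure" and W :: "nat \<Rightarrow> 'a \<Rightarrow> real" and n :: nat and \<delta> A0 x :: real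
  defines "d \<equiv> sqrt (\<Sum>i\<in>{1..n}. integral\<^sup>L M (\<lambda>\<omega>. (W i \<omega>)\<^sup>2)) /
          (\<Sum>i\<in>{1..n}. integral\<^sup>L M (\<lambda>\<omega>. \<bar>W i \<omega>\<bar> powr (2 + \<delta>))) powr (1 / (2 + \<delta>))"
  assumes jsw: "jsw_constant M A0" and \<delta>: "0 < \<delta>" "\<delta> \<le> 1" and n: "1 \<le> n"
    and ind: "prob_space.indep_vars M (\<lambda>_. borel) W {1..n}"
    and int: "\<forall>i\<in>{1..n}. integrable M (\<lambda>\<omega>. \<bar>W i \<omega>\<bar> powr (2 + \<delta>))"
    and pos: "\<forall>i\<in>{1..n}. 0 < integral\<^sup>L M (\<lambda>\<omega>. \<bar>W i \<omega>\<bar> powr (2 + \<delta>))"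
    and mean: "\<forall>i\<in>{1..n}. integral\<^sup>L M (W i) = 0"
    and x: "0 \<le> x" "x \<le> d"
  shows "measure M {\<omega> \<in> space M. x \<le> (\<Sum>i\<in>{1..n}. W i \<omega>) / sqrt (\<Sum>i\<in>{1..n}. (W i \<omega>)\<^sup>2)}
      \<le> (1 - Phi x) + A0 * (1 + x) powr (1 + \<delta>) * exp (- x\<^sup>2 / 2) / d powr (2 + \<delta>)"
proof -
  have "\<bar>measure M {\<omega> \<in> space M. x \<le> (\<Sum>i\<in>{1..n}. W i \<omega>) / sqrt (\<Sum>i\<in>{1..n}. (W i \<omega>)\<^sup>2)}
          - (1 - Phi x)\<bar> \<le> A0 * (1 + x) powr (1 + \<delta>) * exp (- x\<^sup>2 / 2) / d powr (2 + \<delta>)"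
    using jsw \<delta> n ind int pos mean x unfolding jsw_constant_def Let_def d_def
    by (elim allE[where x=n] allE[where x=W] allE[where x=\<delta>]) auto
  then show ?thesis by linarith
qed

text \<open>Lyapunov's inequality \<open>E W\<^sup>2 \<le> (E |W| powr (2 + \<delta>)) powr (2 / (2 + \<delta>))\<close>, together with
  integrability of \<open>W\<^sup>2\<close>; it follows from Young's inequality
  \<open>a powr q * m powr (1 - q) \<le> q a + (1 - q) m\<close> applied to \<open>a = |W| powr (2 + \<delta>)\<close>.\<close>

lemma (in prob_space) second_moment_le_moment_powr:
  fixes W :: "'a \<Rightarrow> real"
  assumes meas: "W \<in> borel_measurable M" and \<delta>: "0 < \<delta>"
    and int: "integrable M (\<lambda>\<omega>. \<bar>W \<omega>\<bar> powr (2 + \<delta>))"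
    and pos: "0 < integral\<^sup>L M (\<lambda>\<omega>. \<bar>W \<omega>\<bar> powr (2 + \<delta>))"
  shows "integrable M (\<lambda>\<omega>. (W \<omega>)\<^sup>2)"
    "integral\<^sup>L M (\<lambda>\<omega>. (W \<omega>)\<^sup>2) \<le> (integral\<^sup>L M (\<lambda>\<omega>. \<bar>W \<omega>\<bar> powr (2 + \<delta>))) powr (2 / (2 + \<delta>))"
proof -
  define m where "m = integral\<^sup>L M (\<lambda>\<omega>. \<bar>W \<omega>\<bar> powr (2 + \<delta>))"
  define q where "q = 2 / (2 + \<delta>)"
  have q: "0 \<le> q" "q \<le> 1" using \<delta> unfolding q_def by auto
  have m: "0 < m" using pos unfolding m_def .
  define g where "g \<omega> = (q * \<bar>W \<omega>\<bar> powr (2 + \<delta>) + (1 - q) * m) / m powr (1 - q)" for \<omega>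
  have pointwise: "(W \<omega>)\<^sup>2 \<le> g \<omega>" for \<omega>
  proof (cases "W \<omega> = 0")
    case True
    then show ?thesis unfolding g_def using q m by (auto intro!: divide_nonneg_pos)
  next
    case False
    have "(2 + \<delta>) * (2 / (2 + \<delta>)) = 2" using \<delta> by (simp add: field_simps)
    then have "(\<bar>W \<omega>\<bar> powr (2 + \<delta>)) powr q = \<bar>W \<omega>\<bar> powr 2"
      unfolding q_def powr_powr by simp
    then have "(\<bar>W \<omega>\<bar> powr (2 + \<delta>)) powr q = (W \<omega>)\<^sup>2" using False by (simp add: powr_numeral)
    moreover have "(\<bar>W \<omega>\<bar> powr (2 + \<delta>)) powr q * m powr (1 - q)
        \<le> q * \<bar>W \<omega>\<bar> powr (2 + \<delta>) + (1 - q) * m"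
      using q m False by (intro Youngs_inequality_0) auto
    ultimately show ?thesis unfolding g_def using m by (simp add: field_simps)
  qed
  have g_int: "integrable M g"
    unfolding g_def using int by (intro integrable_divide integrable_add integrable_mult_right) auto
  show W2_int: "integrable M (\<lambda>\<omega>. (W \<omega>)\<^sup>2)"
    using meas pointwise
    by (intro Bochner_Integration.integrable_bound[OF g_int]) (auto intro!: AE_I2 order.trans[OF pointwise abs_ge_self])
  have "integral\<^sup>L M (\<lambda>\<omega>. (W \<omega>)\<^sup>2) \<le> integral\<^sup>L M g"
    using W2_int g_int pointwise by (intro integral_mono) auto
  also have "integral\<^sup>L M g = (q * m + (1 - q) * m) / m powr (1 - q)"
    unfolding g_def using int by (simp add: m_def prob_space)
  also have "\<dots> = m powr q" using m by (simp add: algebra_simps powr_diff)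
  finally show "integral\<^sup>L M (\<lambda>\<omega>. (W \<omega>)\<^sup>2) \<le> (integral\<^sup>L M (\<lambda>\<omega>. \<bar>W \<omega>\<bar> powr (2 + \<delta>))) powr (2 / (2 + \<delta>))"
    unfolding m_def q_def .
qed

locale stiv_setting = prob_space M
  for M :: "'a measure" +
  fixes n K L :: nat and y u :: "nat \<Rightarrow> 'a \<Rightarrow> real"
    and x z :: "nat \<Rightarrow> nat \<Rightarrow> 'a \<Rightarrow> real" and \<delta> :: real
  assumes n_pos: "1 \<le> n" and L_pos: "1 \<le> L"
    and indep: "indep_vars
        (\<lambda>i. borel \<Otimes>\<^sub>M (\<Pi>\<^sub>M k\<in>{1..K}. borel) \<Otimes>\<^sub>M (\<Pi>\<^sub>M l\<in>{1..L}. borel) \<Otimes>\<^sub>M borel)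
        (\<lambda>i \<omega>. (y i \<omega>, restrict (\<lambda>k. x k i \<omega>) {1..K}, restrict (\<lambda>l. z l i \<omega>) {1..L}, u i \<omega>))
        {1..n}"
    and \<delta>: "0 < \<delta>" "\<delta> \<le> 1"
    and A1_int: "\<forall>l\<in>{1..L}. \<forall>i\<in>{1..n}. integrable M (\<lambda>\<omega>. \<bar>z l i \<omega> * u i \<omega>\<bar> powr (2 + \<delta>))"
    and A1_mean: "\<forall>l\<in>{1..L}. \<forall>i\<in>{1..n}. integral\<^sup>L M (\<lambda>\<omega>. z l i \<omega> * u i \<omega>) = 0"
    and A1_nz: "\<forall>l\<in>{1..L}. \<forall>i\<in>{1..n}. \<not> (AE \<omega> in M. z l i \<omega> * u i \<omega> = 0)"
begin

definition d_instr :: "nat \<Rightarrow> real" where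
  "d_instr l = sqrt (\<Sum>i\<in>{1..n}. integral\<^sup>L M (\<lambda>\<omega>. (z l i \<omega> * u i \<omega>)\<^sup>2)) /
      (\<Sum>i\<in>{1..n}. integral\<^sup>L M (\<lambda>\<omega>. \<bar>z l i \<omega> * u i \<omega>\<bar> powr (2 + \<delta>))) powr (1 / (2 + \<delta>))"

definition self_norm :: "nat \<Rightarrow> 'a \<Rightarrow> real" where
  "self_norm l \<omega> = (\<Sum>i\<in>{1..n}. z l i \<omega> * u i \<omega>) / sqrt (\<Sum>i\<in>{1..n}. (z l i \<omega> * u i \<omega>)\<^sup>2)"

definition upper_tail :: "real \<Rightarrow> nat \<Rightarrow> 'a set" where
  "upper_tail t l = {\<omega> \<in> space M. t \<le> self_norm l \<omega>}"

definition lower_tail :: "real \<Rightarrow> nat \<Rightarrow> 'a set" where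
  "lower_tail t l = {\<omega> \<in> space M. t \<le> - self_norm l \<omega>}"

lemma product_measurable:
  assumes "l \<in> {1..L}" "i \<in> {1..n}"
  shows "(\<lambda>\<omega>. z l i \<omega> * u i \<omega>) \<in> borel_measurable M"
proof -
  have select: "(\<lambda>v::real \<times> (nat \<Rightarrow> real) \<times> (nat \<Rightarrow> real) \<times> real. fst (snd (snd v)) l * snd (snd (snd v)))
     \<in> borel_measurable (borel \<Otimes>\<^sub>M (\<Pi>\<^sub>M k\<in>{1..K}. borel) \<Otimes>\<^sub>M (\<Pi>\<^sub>M l\<in>{1..L}. borel) \<Otimes>\<^sub>M borel)"
    using assms by measurable
  have observation: "(\<lambda>\<omega>. (y i \<omega>, restrict (\<lambda>k. x k i \<omega>) {1..K}, restrict (\<lambda>l. z l i \<omega>) {1..L}, u i \<omega>))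
     \<in> measurable M (borel \<Otimes>\<^sub>M (\<Pi>\<^sub>M k\<in>{1..K}. borel) \<Otimes>\<^sub>M (\<Pi>\<^sub>M l\<in>{1..L}. borel) \<Otimes>\<^sub>M borel)"
    using indep assms unfolding indep_vars_def by auto
  show ?thesis using measurable_comp[OF observation select] assms by (simp add: comp_def)
qed

lemma products_indep:
  assumes "l \<in> {1..L}"
  shows "indep_vars (\<lambda>_. borel) (\<lambda>i \<omega>. z l i \<omega> * u i \<omega>) {1..n}"
  using indep_vars_compose2[OF indep, of "\<lambda>_ v. fst (snd (snd v)) l * snd (snd (snd v))" "\<lambda>_. borel"]
    assms by simp

lemma self_norm_measurable: "l \<in> {1..L} \<Longrightarrow> self_norm l \<in> borel_measurable M"
  unfolding self_norm_def using product_measurable by measurable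

lemma tails_sets: "l \<in> {1..L} \<Longrightarrow> upper_tail t l \<in> sets M" "l \<in> {1..L} \<Longrightarrow> lower_tail t l \<in> sets M"
  unfolding upper_tail_def lower_tail_def using self_norm_measurable by measurable

text \<open>Assumption 1 makes all moments of the products positive, so every \<open>d\<^sub>l\<close> is positive;
  by Lyapunov's inequality \<open>d\<^sub>l\<^sup>2 \<le> n\<close>.\<close>

lemma nonzero_expectation:
  fixes f :: "real \<Rightarrow> real"
  assumes l: "l \<in> {1..L}" and i: "i \<in> {1..n}"
    and int: "integrable M (\<lambda>\<omega>. f (z l i \<omega> * u i \<omega>))"
    and f: "\<And>v. 0 \<le> f v" "\<And>v. f v = 0 \<Longrightarrow> v = 0"
  shows "0 < integral\<^sup>L M (\<lambda>\<omega>. f (z l i \<omega> * u i \<omega>))"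
proof (rule ccontr)
  assume "\<not> ?thesis"
  moreover have "0 \<le> integral\<^sup>L M (\<lambda>\<omega>. f (z l i \<omega> * u i \<omega>))"
    using f by (intro integral_nonneg_AE) auto
  ultimately have "integral\<^sup>L M (\<lambda>\<omega>. f (z l i \<omega> * u i \<omega>)) = 0" by linarith
  then have "AE \<omega> in M. f (z l i \<omega> * u i \<omega>) = 0"
    using integral_nonneg_eq_0_iff_AE[OF int] f by auto
  then have "AE \<omega> in M. z l i \<omega> * u i \<omega> = 0" by (rule AE_mp) (intro AE_I2 impI, erule f(2))
  then show False using A1_nz l i by auto
qed

lemma moment_pos:
  assumes "l \<in> {1..L}" "i \<in> {1..n}"
  shows "0 < integral\<^sup>L M (\<lambda>\<omega>. \<bar>z l i \<omega> * u i \<omega>\<bar> powr (2 + \<delta>))"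
  using nonzero_expectation[OF assms, of "\<lambda>v. \<bar>v\<bar> powr (2 + \<delta>)"] A1_int assms by auto

lemma second_moment:
  assumes "l \<in> {1..L}" "i \<in> {1..n}"
  shows "integrable M (\<lambda>\<omega>. (z l i \<omega> * u i \<omega>)\<^sup>2)"
    "integral\<^sup>L M (\<lambda>\<omega>. (z l i \<omega> * u i \<omega>)\<^sup>2)
       \<le> (integral\<^sup>L M (\<lambda>\<omega>. \<bar>z l i \<omega> * u i \<omega>\<bar> powr (2 + \<delta>))) powr (2 / (2 + \<delta>))"
    "0 < integral\<^sup>L M (\<lambda>\<omega>. (z l i \<omega> * u i \<omega>)\<^sup>2)"
proof -
  note Lyapunov = second_moment_le_moment_powr[OF product_measurable[OF assms] \<delta>(1) _ moment_pos[OF assms]]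
  show "integrable M (\<lambda>\<omega>. (z l i \<omega> * u i \<omega>)\<^sup>2)"
    and "integral\<^sup>L M (\<lambda>\<omega>. (z l i \<omega> * u i \<omega>)\<^sup>2)
       \<le> (integral\<^sup>L M (\<lambda>\<omega>. \<bar>z l i \<omega> * u i \<omega>\<bar> powr (2 + \<delta>))) powr (2 / (2 + \<delta>))"
    using Lyapunov A1_int assms by auto
  then show "0 < integral\<^sup>L M (\<lambda>\<omega>. (z l i \<omega> * u i \<omega>)\<^sup>2)"
    using nonzero_expectation[OF assms, of "\<lambda>v. v\<^sup>2"] by auto
qed

lemma d_instr_pos:
  assumes l: "l \<in> {1..L}"
  shows "0 < d_instr l"
proof -
  have "0 < (\<Sum>i\<in>{1..n}. integral\<^sup>L M (\<lambda>\<omega>. (z l i \<omega> * u i \<omega>)\<^sup>2))"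
    using second_moment(3)[OF l] n_pos by (intro sum_pos) auto
  moreover have "0 < (\<Sum>i\<in>{1..n}. integral\<^sup>L M (\<lambda>\<omega>. \<bar>z l i \<omega> * u i \<omega>\<bar> powr (2 + \<delta>)))"
    using moment_pos[OF l] n_pos by (intro sum_pos) auto
  ultimately show ?thesis unfolding d_instr_def by simp
qed

lemma d_instr_sq_le_n:
  assumes l: "l \<in> {1..L}"
  shows "(d_instr l)\<^sup>2 \<le> real n"
proof -
  define S2 where "S2 = (\<Sum>i\<in>{1..n}. integral\<^sup>L M (\<lambda>\<omega>. (z l i \<omega> * u i \<omega>)\<^sup>2))"
  define Sm where "Sm = (\<Sum>i\<in>{1..n}. integral\<^sup>L M (\<lambda>\<omega>. \<bar>z l i \<omega> * u i \<omega>\<bar> powr (2 + \<delta>)))"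
  have S2: "0 \<le> S2" unfolding S2_def by (intro sum_nonneg integral_nonneg_AE) auto
  have Sm: "0 < Sm" unfolding Sm_def using moment_pos[OF l] n_pos by (intro sum_pos) auto
  have "S2 \<le> (\<Sum>i\<in>{1..n}. Sm powr (2 / (2 + \<delta>)))"
    unfolding S2_def
  proof (rule sum_mono)
    fix i assume i: "i \<in> {1..n}"
    have "integral\<^sup>L M (\<lambda>\<omega>. \<bar>z l i \<omega> * u i \<omega>\<bar> powr (2 + \<delta>)) \<le> Sm"
      unfolding Sm_def using i by (intro member_le_sum) (auto intro: integral_nonneg_AE)
    then have "(integral\<^sup>L M (\<lambda>\<omega>. \<bar>z l i \<omega> * u i \<omega>\<bar> powr (2 + \<delta>))) powr (2 / (2 + \<delta>))
        \<le> Sm powr (2 / (2 + \<delta>))"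
      using \<delta> moment_pos[OF l i] by (intro powr_mono2) auto
    then show "integral\<^sup>L M (\<lambda>\<omega>. (z l i \<omega> * u i \<omega>)\<^sup>2) \<le> Sm powr (2 / (2 + \<delta>))"
      using second_moment(2)[OF l i] by linarith
  qed
  then have S2_le: "S2 \<le> real n * Sm powr (2 / (2 + \<delta>))" by simp
  have "(d_instr l)\<^sup>2 = S2 / (Sm powr (1 / (2 + \<delta>)))\<^sup>2"
    unfolding d_instr_def S2_def[symmetric] Sm_def[symmetric] using S2 by (simp add: power_divide)
  also have "(Sm powr (1 / (2 + \<delta>)))\<^sup>2 = Sm powr (2 / (2 + \<delta>))"
    using Sm by (simp add: powr_powr[symmetric] powr_numeral[symmetric] powr_powr)
  finally show ?thesis using S2_le Sm by (simp add: pos_divide_le_eq)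
qed

lemma d_ndelta_eq: "d_ndelta M n L \<delta> z u = Min (d_instr ` {1..L})"
  unfolding d_ndelta_def d_instr_def[abs_def] by (rule refl)

lemma d_ndelta_le: "l \<in> {1..L} \<Longrightarrow> d_ndelta M n L \<delta> z u \<le> d_instr l"
  unfolding d_ndelta_eq by (rule Min_le) auto

lemma d_ndelta_pos: "0 < d_ndelta M n L \<delta> z u"
proof -
  have "Min (d_instr ` {1..L}) \<in> d_instr ` {1..L}" using L_pos by (intro Min_in) auto
  then show ?thesis unfolding d_ndelta_eq using d_instr_pos by auto
qed

lemma d_ndelta_sq_le_n: "(d_ndelta M n L \<delta> z u)\<^sup>2 \<le> real n"
proof -
  have "d_ndelta M n L \<delta> z u \<le> d_instr 1" using L_pos by (intro d_ndelta_le) auto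
  then have "(d_ndelta M n L \<delta> z u)\<^sup>2 \<le> (d_instr 1)\<^sup>2"
    using d_ndelta_pos by (intro power_mono) auto
  also have "\<dots> \<le> real n" using L_pos by (intro d_instr_sq_le_n) auto
  finally show ?thesis .
qed

text \<open>Each one-sided tail of each self-normalised sum is bounded by the JSW estimate
  with \<open>d\<^sub>l\<close> replaced by the smaller \<open>d\<^sub>n\<^sub>,\<^sub>\<delta>\<close>.\<close>

definition tail_bound :: "real \<Rightarrow> real \<Rightarrow> real" where
  "tail_bound A0 t = 1 - Phi t
     + A0 * (1 + t) powr (1 + \<delta>) * exp (- t\<^sup>2 / 2) / (d_ndelta M n L \<delta> z u) powr (2 + \<delta>)"

lemma tails_le:
  assumes jsw: "jsw_constant M A0" "0 \<le> A0" and l: "l \<in> {1..L}"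
    and t: "0 \<le> t" "t \<le> d_ndelta M n L \<delta> z u"
  shows "measure M (upper_tail t l) \<le> tail_bound A0 t" "measure M (lower_tail t l) \<le> tail_bound A0 t"
proof -
  define d where "d = d_ndelta M n L \<delta> z u"
  define jsw_l where "jsw_l = 1 - Phi t
    + A0 * (1 + t) powr (1 + \<delta>) * exp (- t\<^sup>2 / 2) / (d_instr l) powr (2 + \<delta>)"
  have d: "0 < d" "d \<le> d_instr l" unfolding d_def using d_ndelta_pos d_ndelta_le[OF l] by auto
  have "d powr (2 + \<delta>) \<le> d_instr l powr (2 + \<delta>)" using d \<delta> by (intro powr_mono2) auto
  then have "A0 * (1 + t) powr (1 + \<delta>) * exp (- t\<^sup>2 / 2) / (d_instr l) powr (2 + \<delta>)
      \<le> A0 * (1 + t) powr (1 + \<delta>) * exp (- t\<^sup>2 / 2) / d powr (2 + \<delta>)"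
    using d d_instr_pos[OF l] jsw(2) t by (intro divide_left_mono) auto
  then have jsw_le: "jsw_l \<le> tail_bound A0 t" unfolding tail_bound_def d_def jsw_l_def by linarith
  have td: "t \<le> d_instr l" using t d unfolding d_def by linarith
  have int: "\<forall>i\<in>{1..n}. integrable M (\<lambda>\<omega>. \<bar>z l i \<omega> * u i \<omega>\<bar> powr (2 + \<delta>))"
    and mean: "\<forall>i\<in>{1..n}. integral\<^sup>L M (\<lambda>\<omega>. z l i \<omega> * u i \<omega>) = 0"
    and pos: "\<forall>i\<in>{1..n}. 0 < integral\<^sup>L M (\<lambda>\<omega>. \<bar>z l i \<omega> * u i \<omega>\<bar> powr (2 + \<delta>))"
    using A1_int A1_mean moment_pos l by auto
  have "measure M (upper_tail t l) \<le> jsw_l"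
    using jsw_upper_tail[OF jsw(1) \<delta> n_pos products_indep[OF l] int pos mean t(1)] td
    unfolding upper_tail_def self_norm_def jsw_l_def d_instr_def by simp
  then show "measure M (upper_tail t l) \<le> tail_bound A0 t" using jsw_le by linarith
  have neg_indep: "indep_vars (\<lambda>_. borel) (\<lambda>i \<omega>. - (z l i \<omega> * u i \<omega>)) {1..n}"
    using indep_vars_compose2[OF products_indep[OF l], of "\<lambda>_ v. - v" "\<lambda>_. borel"] by simp
  have "lower_tail t l = {\<omega> \<in> space M.
      t \<le> (\<Sum>i\<in>{1..n}. - (z l i \<omega> * u i \<omega>)) / sqrt (\<Sum>i\<in>{1..n}. (- (z l i \<omega> * u i \<omega>))\<^sup>2)}"
    unfolding lower_tail_def self_norm_def by (simp add: sum_negf)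
  then have "measure M (lower_tail t l) \<le> jsw_l"
    using jsw_upper_tail[OF jsw(1) \<delta> n_pos neg_indep _ _ _ t(1)] int pos mean td
    unfolding jsw_l_def d_instr_def by simp
  then show "measure M (lower_tail t l) \<le> tail_bound A0 t" using jsw_le by linarith
qed

lemma tails_union_le:
  assumes "jsw_constant M A0" "0 \<le> A0" "0 \<le> t" "t \<le> d_ndelta M n L \<delta> z u"
  shows "measure M (\<Union>l\<in>{1..L}. upper_tail t l \<union> lower_tail t l) \<le> 2 * real L * tail_bound A0 t"
proof -
  have "measure M (\<Union>l\<in>{1..L}. upper_tail t l \<union> lower_tail t l)
      \<le> (\<Sum>l\<in>{1..L}. measure M (upper_tail t l \<union> lower_tail t l))"
    using tails_sets by (intro measure_subadditive_finite) (auto simp: emeasure_eq_measure)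
  also have "\<dots> \<le> (\<Sum>l\<in>{1..L}. measure M (upper_tail t l) + measure M (lower_tail t l))"
    using tails_sets by (intro sum_mono measure_Un_le) auto
  also have "\<dots> \<le> (\<Sum>l\<in>{1..L}. 2 * tail_bound A0 t)"
  proof (rule sum_mono)
    fix l assume "l \<in> {1..L}"
    from tails_le[OF assms(1,2) this assms(3,4)]
    show "measure M (upper_tail t l) + measure M (lower_tail t l) \<le> 2 * tail_bound A0 t"
      by linarith
  qed
  finally show ?thesis by (simp add: mult_ac)
qed

text \<open>At level \<open>0\<close> the two tails of a single instrument already cover the sample
  space, so the union bound is then trivial.\<close>

lemma tail_bound_zero_ge_one:
  assumes "jsw_constant M A0" "0 \<le> A0"
  shows "1 \<le> 2 * real L * tail_bound A0 0"
proof -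
  have "space M \<subseteq> (\<Union>l\<in>{1..L}. upper_tail 0 l \<union> lower_tail 0 l)"
    using L_pos unfolding upper_tail_def lower_tail_def by force
  then have "measure M (space M) \<le> measure M (\<Union>l\<in>{1..L}. upper_tail 0 l \<union> lower_tail 0 l)"
    using tails_sets by (intro finite_measure_mono) auto
  then show ?thesis
    using tails_union_le[OF assms order.refl less_imp_le[OF d_ndelta_pos]] prob_space by simp
qed

definition good_event :: "real \<Rightarrow> 'a set" where
  "good_event t = {\<omega> \<in> space M. \<forall>l\<in>{1..L}.
      \<bar>\<Sum>i\<in>{1..n}. z l i \<omega> * u i \<omega>\<bar> \<le> t * sqrt (\<Sum>i\<in>{1..n}. (z l i \<omega> * u i \<omega>)\<^sup>2)}"

lemma good_event_sets: "good_event t \<in> sets M"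
  unfolding good_event_def
proof (intro sets.sets_Collect_finite_All)
  fix l assume "l \<in> {1..L}"
  then have "(\<lambda>\<omega>. \<Sum>i\<in>{1..n}. z l i \<omega> * u i \<omega>) \<in> borel_measurable M"
    "(\<lambda>\<omega>. \<Sum>i\<in>{1..n}. (z l i \<omega> * u i \<omega>)\<^sup>2) \<in> borel_measurable M"
    using product_measurable by (auto intro!: borel_measurable_sum borel_measurable_power)
  then show "{\<omega> \<in> space M. \<bar>\<Sum>i\<in>{1..n}. z l i \<omega> * u i \<omega>\<bar>
      \<le> t * sqrt (\<Sum>i\<in>{1..n}. (z l i \<omega> * u i \<omega>)\<^sup>2)} \<in> sets M"
    by measurable
qed simp

lemma not_good_event_in_tails:
  assumes "0 \<le> t"
  shows "space M - good_event t \<subseteq> (\<Union>l\<in>{1..L}. upper_tail t l \<union> lower_tail t l)"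
proof
  fix \<omega> assume \<omega>: "\<omega> \<in> space M - good_event t"
  then obtain l where l: "l \<in> {1..L}"
    and gt: "t * sqrt (\<Sum>i\<in>{1..n}. (z l i \<omega> * u i \<omega>)\<^sup>2) < \<bar>\<Sum>i\<in>{1..n}. z l i \<omega> * u i \<omega>\<bar>"
    unfolding good_event_def by auto
  define S where "S = (\<Sum>i\<in>{1..n}. z l i \<omega> * u i \<omega>)"
  define V where "V = sqrt (\<Sum>i\<in>{1..n}. (z l i \<omega> * u i \<omega>)\<^sup>2)"
  have "V \<noteq> 0"
  proof
    assume "V = 0"
    then have "(\<Sum>i\<in>{1..n}. (z l i \<omega> * u i \<omega>)\<^sup>2) = 0" unfolding V_def by simp
    then have "\<forall>i\<in>{1..n}. (z l i \<omega> * u i \<omega>)\<^sup>2 = 0" by (simp add: sum_nonneg_eq_0_iff)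
    then have "S = 0" unfolding S_def by (intro sum.neutral) auto
    then show False using gt \<open>V = 0\<close> unfolding S_def[symmetric] V_def[symmetric] by simp
  qed
  moreover have "0 \<le> V" unfolding V_def by (simp add: sum_nonneg)
  ultimately have "0 < V" by simp
  then have "t \<le> S / V \<or> t \<le> - (S / V)"
    using gt unfolding S_def[symmetric] V_def[symmetric] by (cases "0 \<le> S") (auto simp: field_simps)
  then show "\<omega> \<in> (\<Union>l\<in>{1..L}. upper_tail t l \<union> lower_tail t l)"
    using l \<omega> unfolding upper_tail_def lower_tail_def self_norm_def S_def V_def by auto
qed

lemma good_event_prob:
  assumes "jsw_constant M A0" "0 \<le> A0" "0 \<le> t" "t \<le> d_ndelta M n L \<delta> z u"
  shows "1 - 2 * real L * tail_bound A0 t \<le> measure M (good_event t)"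
proof -
  have "measure M (space M - good_event t)
      \<le> measure M (\<Union>l\<in>{1..L}. upper_tail t l \<union> lower_tail t l)"
    using not_good_event_in_tails[OF assms(3)] tails_sets by (intro finite_measure_mono) auto
  also have "\<dots> \<le> 2 * real L * tail_bound A0 t" by (rule tails_union_le[OF assms])
  finally have "measure M (space M - good_event t) \<le> 2 * real L * tail_bound A0 t" .
  then show ?thesis using prob_compl[OF good_event_sets] by simp
qed

end

text \<open>The self-normalised bound \<open>|\<Sum>\<^sub>i z\<^sub>l\<^sub>i u\<^sub>i| \<le> t sqrt(\<Sum>\<^sub>i (z\<^sub>l\<^sub>i u\<^sub>i)\<^sup>2)\<close> together with
  \<open>|z\<^sub>l\<^sub>i| \<le> z\<^sub>l\<^sub>*\<close> gives the score bound assumed for a good sample, with \<open>r = t / sqrt n\<close>.\<close>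

lemma score_bound_from_self_normalised:
  fixes Z :: "nat \<Rightarrow> nat \<Rightarrow> real" and U :: "nat \<Rightarrow> real"
  assumes n: "1 \<le> n" and zp: "0 < zstar n Z l" and t: "0 \<le> t"
    and hyp: "\<bar>\<Sum>i\<in>{1..n}. Z l i * U i\<bar> \<le> t * sqrt (\<Sum>i\<in>{1..n}. (Z l i * U i)\<^sup>2)"
  shows "\<bar>(1 / real n) * (\<Sum>i\<in>{1..n}. Z l i / zstar n Z l * U i)\<bar>
           \<le> t / sqrt (real n) * sqrt ((1 / real n) * (\<Sum>i\<in>{1..n}. (U i)\<^sup>2))"
proof -
  define zs where "zs = zstar n Z l"
  have n: "0 < real n" using n by simp
  have zs: "0 < zs" using zp unfolding zs_def .
  have "(\<Sum>i\<in>{1..n}. (Z l i * U i)\<^sup>2) \<le> (\<Sum>i\<in>{1..n}. zs\<^sup>2 * (U i)\<^sup>2)"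
  proof (rule sum_mono)
    fix i assume "i \<in> {1..n}"
    then have "\<bar>Z l i\<bar> \<le> zs" unfolding zs_def zstar_def by (intro Max_ge) auto
    then have "(Z l i)\<^sup>2 \<le> zs\<^sup>2" by (metis abs_ge_zero power2_abs power_mono)
    then show "(Z l i * U i)\<^sup>2 \<le> zs\<^sup>2 * (U i)\<^sup>2" by (simp add: power_mult_distrib mult_right_mono)
  qed
  then have "sqrt (\<Sum>i\<in>{1..n}. (Z l i * U i)\<^sup>2) \<le> zs * sqrt (\<Sum>i\<in>{1..n}. (U i)\<^sup>2)"
    using zs by (metis real_sqrt_le_mono real_sqrt_mult sum_distrib_left real_sqrt_abs abs_of_pos)
  then have sum_bound: "\<bar>\<Sum>i\<in>{1..n}. Z l i * U i\<bar> \<le> t * (zs * sqrt (\<Sum>i\<in>{1..n}. (U i)\<^sup>2))"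
    using hyp t by (meson mult_left_mono order_trans)
  have "\<bar>(1 / real n) * (\<Sum>i\<in>{1..n}. Z l i / zstar n Z l * U i)\<bar>
      = \<bar>\<Sum>i\<in>{1..n}. Z l i * U i\<bar> / (real n * zs)"
    unfolding zs_def[symmetric] using zs n
    by (simp add: sum_divide_distrib[symmetric] abs_mult abs_divide field_simps)
  also have "\<dots> \<le> t * (zs * sqrt (\<Sum>i\<in>{1..n}. (U i)\<^sup>2)) / (real n * zs)"
    using sum_bound n zs by (intro divide_right_mono) auto
  also have "\<dots> = t / sqrt (real n) * sqrt ((1 / real n) * (\<Sum>i\<in>{1..n}. (U i)\<^sup>2))"
    using zs n by (simp add: real_sqrt_mult real_sqrt_divide field_simps)
  finally show ?thesis .
qed

locale stiv_model = stiv_setting +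
  fixes kend :: nat and beta :: "nat \<Rightarrow> real" and c :: real
  assumes LK: "K \<le> L" and kend: "kend \<le> K"
    and model: "\<forall>i\<in>{1..n}. \<forall>\<omega>\<in>space M. y i \<omega> = (\<Sum>k\<in>{1..K}. x k i \<omega> * beta k) + u i \<omega>"
    and exo: "\<forall>l\<in>{1..K - kend}. \<forall>i\<in>{1..n}. \<forall>\<omega>\<in>space M. z l i \<omega> = x (kend + l) i \<omega>"
    and xstar_pos: "\<forall>\<omega>\<in>space M. \<forall>k\<in>{1..K}. 0 < xstar n (\<lambda>k i. x k i \<omega>) k"
    and zstar_pos: "\<forall>\<omega>\<in>space M. \<forall>l\<in>{1..L}. 0 < zstar n (\<lambda>l i. z l i \<omega>) l"
    and c: "0 < c" "c < 1"
begin

text \<open>Every sample point of the good event at level \<open>t \<le> d\<^sub>n\<^sub>,\<^sub>\<delta>\<close> is a good sample for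
  \<open>r = t/\<surd>n\<close>; here \<open>r \<le> 1\<close> because \<open>d\<^sub>n\<^sub>,\<^sub>\<delta>\<^sup>2 \<le> n\<close>.\<close>

lemma good_sample:
  assumes t: "0 \<le> t" "t \<le> d_ndelta M n L \<delta> z u" and r: "r = t / sqrt (real n)" "0 < r"
    and \<omega>: "\<omega> \<in> good_event t"
  shows "stiv_good_sample n K L kend (\<lambda>k i. x k i \<omega>) (\<lambda>l i. z l i \<omega>) (\<lambda>i. y i \<omega>)
           (\<lambda>i. u i \<omega>) beta c r"
proof -
  have space: "\<omega> \<in> space M" using \<omega> unfolding good_event_def by simp
  have "d_ndelta M n L \<delta> z u \<le> sqrt (real n)" using d_ndelta_sq_le_n by (rule real_le_rsqrt)
  then have "r \<le> 1" unfolding r(1) using t n_pos by simp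
  moreover have "\<forall>l\<in>{1..L}.
      \<bar>(1 / real n) * (\<Sum>i\<in>{1..n}. z l i \<omega> / zstar n (\<lambda>l i. z l i \<omega>) l * u i \<omega>)\<bar>
        \<le> r * sqrt ((1 / real n) * (\<Sum>i\<in>{1..n}. (u i \<omega>)\<^sup>2))"
    using score_bound_from_self_normalised[OF n_pos _ t(1), where Z = "\<lambda>l i. z l i \<omega>"
        and U = "\<lambda>i. u i \<omega>"] zstar_pos space \<omega>
    unfolding good_event_def r(1) by auto
  ultimately show ?thesis
    using n_pos LK kend model exo xstar_pos c r(2) space unfolding stiv_good_sample_def by auto
qed

end

text \<open>The hypothesis \<open>L \<le> exp(d\<^sup>2/(2A\<^sup>2))\<close> says exactly that the threshold
  \<open>A (2 log L)\<^sup>1\<^sup>/\<^sup>2\<close> lies in the range \<open>[0, d]\<close> of the moderate deviation bound.\<close>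

lemma threshold_le_d:
  fixes L :: nat and A d :: real
  assumes L: "1 \<le> L" and A: "1 \<le> A" and d: "0 < d" and L_le: "real L \<le> exp (d\<^sup>2 / (2 * A\<^sup>2))"
  shows "A * sqrt (2 * ln (real L)) \<le> d"
proof -
  have "ln (real L) \<le> d\<^sup>2 / (2 * A\<^sup>2)"
    using L_le L by (metis ln_exp ln_le_cancel_iff exp_gt_zero of_nat_0_less_iff le_less_trans zero_less_one not_le)
  then have "(A * sqrt (2 * ln (real L)))\<^sup>2 \<le> d\<^sup>2"
    using A L by (simp add: power_mult_distrib field_simps)
  then show ?thesis using d by (meson power2_le_imp_le less_imp_le)
qed

text \<open>With \<open>t = A sqrt(2 log L)\<close> one has \<open>L exp(-t\<^sup>2/2) = L powr (1 - A\<^sup>2)\<close>, so the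
  union bound over the \<open>2L\<close> tails is exactly the level \<open>\<alpha>\<close> of the theorem.\<close>

lemma union_bound_level:
  fixes L :: nat and A A0 \<delta> d t :: real
  assumes L: "1 \<le> L" and t: "t = A * sqrt (2 * ln (real L))"
  shows "2 * real L * (1 - Phi t + A0 * (1 + t) powr (1 + \<delta>) * exp (- t\<^sup>2 / 2) / d powr (2 + \<delta>))
    = 2 * real L * (1 - Phi t)
      + 2 * A0 * (1 + t) powr (1 + \<delta>) / (real L powr (A\<^sup>2 - 1) * d powr (2 + \<delta>))"
proof -
  have L_pos: "0 < real L" using L by simp
  have "t\<^sup>2 = A\<^sup>2 * (2 * ln (real L))" unfolding t using L by (simp add: power_mult_distrib)
  then have "exp (- t\<^sup>2 / 2) = real L powr (- (A\<^sup>2))" using L_pos by (simp add: powr_def)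
  then have key: "real L * exp (- t\<^sup>2 / 2) = 1 / real L powr (A\<^sup>2 - 1)"
    using L_pos by (simp add: powr_diff powr_minus field_simps)
  define G where "G = A0 * (1 + t) powr (1 + \<delta>)"
  have "real L * (G * exp (- t\<^sup>2 / 2) / d powr (2 + \<delta>))
      = G * (real L * exp (- t\<^sup>2 / 2)) / d powr (2 + \<delta>)" by (simp add: mult_ac)
  also have "\<dots> = G / (real L powr (A\<^sup>2 - 1) * d powr (2 + \<delta>))" unfolding key by simp
  finally have eq: "real L * (G * exp (- t\<^sup>2 / 2) / d powr (2 + \<delta>))
      = G / (real L powr (A\<^sup>2 - 1) * d powr (2 + \<delta>))" .
  have "2 * real L * (1 - Phi t + G * exp (- t\<^sup>2 / 2) / d powr (2 + \<delta>))
      = 2 * real L * (1 - Phi t) + 2 * (real L * (G * exp (- t\<^sup>2 / 2) / d powr (2 + \<delta>)))"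
    by (simp add: algebra_simps)
  also have "\<dots> = 2 * real L * (1 - Phi t) + 2 * (G / (real L powr (A\<^sup>2 - 1) * d powr (2 + \<delta>)))"
    unfolding eq ..
  finally show ?thesis unfolding G_def by (simp add: mult.assoc)
qed

theorem theorem1:
  fixes M :: "'a measure"
    and n K L kend :: nat
    and y u :: "nat \<Rightarrow> 'a \<Rightarrow> real"
    and x z :: "nat \<Rightarrow> nat \<Rightarrow> 'a \<Rightarrow> real"
    and beta :: "nat \<Rightarrow> real"
    and \<delta> A A0 c r \<alpha> d :: real
  assumes P: "prob_space M"
    and n_pos: "1 \<le> n" and L_pos: "1 \<le> L" and LK: "K \<le> L" and kend: "kend \<le> K"
    and model: "\<forall>i\<in>{1..n}. \<forall>\<omega>\<in>space M. y i \<omega> = (\<Sum>k\<in>{1..K}. x k i \<omega> * beta k) + u i \<omega>"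
    and exo: "\<forall>l\<in>{1..K - kend}. \<forall>i\<in>{1..n}. \<forall>\<omega>\<in>space M. z l i \<omega> = x (kend + l) i \<omega>"
    and indep: "prob_space.indep_vars M
        (\<lambda>i. borel \<Otimes>\<^sub>M (\<Pi>\<^sub>M k\<in>{1..K}. borel) \<Otimes>\<^sub>M (\<Pi>\<^sub>M l\<in>{1..L}. borel) \<Otimes>\<^sub>M borel)
        (\<lambda>i \<omega>. (y i \<omega>, restrict (\<lambda>k. x k i \<omega>) {1..K}, restrict (\<lambda>l. z l i \<omega>) {1..L}, u i \<omega>))
        {1..n}"
    and xstar_pos: "\<forall>\<omega>\<in>space M. \<forall>k\<in>{1..K}. 0 < xstar n (\<lambda>k i. x k i \<omega>) k"
    and zstar_pos: "\<forall>\<omega>\<in>space M. \<forall>l\<in>{1..L}. 0 < zstar n (\<lambda>l i. z l i \<omega>) l"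
    and delta: "0 < \<delta>" "\<delta> \<le> 1"
    and A1_int: "\<forall>l\<in>{1..L}. \<forall>i\<in>{1..n}. integrable M (\<lambda>\<omega>. \<bar>z l i \<omega> * u i \<omega>\<bar> powr (2 + \<delta>))"
    and A1_mean: "\<forall>l\<in>{1..L}. \<forall>i\<in>{1..n}. integral\<^sup>L M (\<lambda>\<omega>. z l i \<omega> * u i \<omega>) = 0"
    and A1_nz: "\<forall>l\<in>{1..L}. \<forall>i\<in>{1..n}. \<not> (AE \<omega> in M. z l i \<omega> * u i \<omega> = 0)"
    and A0: "0 < A0" "jsw_constant M A0"
    and A: "1 \<le> A"
    and c: "0 < c" "c < 1"
    and d_def: "d = d_ndelta M n L \<delta> z u"
    and alpha_def: "\<alpha> = 2 * real L * (1 - Phi (A * sqrt (2 * ln (real L))))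
        + 2 * A0 * (1 + A * sqrt (2 * ln (real L))) powr (1 + \<delta>)
          / (real L powr (A\<^sup>2 - 1) * d powr (2 + \<delta>))"
    and r_def: "r = A * sqrt (2 * ln (real L) / real n)"
    and L_le: "real L \<le> exp (d\<^sup>2 / (2 * A\<^sup>2))"
  shows "\<exists>E\<in>sets M. measure M E \<ge> 1 - \<alpha> \<and>
    (\<forall>\<omega>\<in>E. \<forall>b s.
       stiv_solution n K L (\<lambda>k i. x k i \<omega>) (\<lambda>l i. z l i \<omega>) (\<lambda>i. y i \<omega>) r c b s \<longrightarrow>
       (let X = (\<lambda>k i. x k i \<omega>); Z = (\<lambda>l i. z l i \<omega>); Y = (\<lambda>i. y i \<omega>);
            J = supp K beta;
            Dn = 1 - ereal r / kappa_star n K L X Z c {1..kend} J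
                   - ereal (r\<^sup>2) / kappa_star n K L X Z c {kend+1..K} J;
            kJJ = kappa_star n K L X Z c J J
        in (\<forall>p::ereal. 1 \<le> p \<longrightarrow>
              ereal (lpnorm K p (\<lambda>k. xstar n X k * (b k - beta k)))
                \<le> times_posinv (ereal (2 * s * r) / kappa_p n K L X Z c p J) Dn)
         \<and> (\<forall>k\<in>{1..K}. ereal \<bar>b k - beta k\<bar>
                \<le> times_posinv (ereal (2 * s * r) / (ereal (xstar n X k) * kappa_star n K L X Z c {k} J)) Dn)
         \<and> ereal s \<le> times_posinv
                (ereal (sqrt (Qhat n K X Y beta)) * (1 + ereal r / (ereal c * kJJ)))
                (1 - ereal r / (ereal c * kJJ))))"
proof -
  interpret S: stiv_model M n K L y u x z \<delta> kend beta c
    by (intro stiv_model.intro stiv_setting.intro stiv_setting_axioms.intro stiv_model_axioms.intro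
        P n_pos L_pos indep delta A1_int A1_mean A1_nz LK kend model exo xstar_pos zstar_pos c)
  define t where "t = A * sqrt (2 * ln (real L))"
  have d_pos: "0 < d" unfolding d_def by (rule S.d_ndelta_pos)
  have t: "0 \<le> t" "t \<le> d"
    using threshold_le_d[OF L_pos A d_pos L_le] A L_pos unfolding t_def by auto
  have level: "\<alpha> = 2 * real L * S.tail_bound A0 t"
    unfolding S.tail_bound_def d_def[symmetric] alpha_def t_def[symmetric]
    by (rule union_bound_level[OF L_pos t_def, symmetric])
  show ?thesis
  proof (cases "L = 1")
    case True
    then have "1 \<le> \<alpha>" using level S.tail_bound_zero_ge_one[OF A0(2)] A0(1) unfolding t_def by simp
    then show ?thesis by (intro bexI[of _ "{}"]) auto
  next
    case False
    have r: "r = t / sqrt (real n)" unfolding r_def t_def by (simp add: real_sqrt_divide)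
    have "0 < r" unfolding r t_def using False L_pos A n_pos by simp
    have "1 - \<alpha> \<le> measure M (S.good_event t)"
      unfolding level using S.good_event_prob[OF A0(2) _ t[unfolded d_def]] A0(1) by simp
    then show ?thesis
      using S.good_event_sets
        stiv_good_sample.stiv_oracle_inequalities[OF S.good_sample[OF t[unfolded d_def] r \<open>0 < r\<close>]]
      unfolding Let_def by blast
  qed
qed

end
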